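(* Let $h\in(0,1)$, $K\in C^h([0,T])$, and $K_n$ the Bernstein polynomial approximation of $K$ of order $n$. For $u\in L^2_a$ define $$J(u):=\mathbb E\left[-\int_0^Ta_1u^2(s)ds+a_2X^u(T)\right],\qquad J_n(u):=\mathbb E\left[-\int_0^Ta_1u^2(s)ds+a_2X^u_n(T)\right],$$ where $X^u$ and $X^u_n$ solve $X^u(t)=X(0)+\int_0^tK(t-s)(\alpha u(s)-\beta X^u(s))ds+\sigma\int_0^tK(t-s)dW(s)$ and $X^u_n(t)=X(0)+\int_0^tK_n(t-s)(\alpha u(s)-\beta X^u_n(s))ds+\sigma\int_0^tK_n(t-s)dW(s)$, $t\in[0,T]$. Then $$\sup_{n\in\mathbb N}J_n(u)\to-\infty\quad\text{and}\quad J(u)\to-\infty\qquad\text{as }\|u\|_2\to\infty.$$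
   Context: Fix $T>0$ and constants $\alpha,\beta,\sigma>0$, $a_1,a_2>0$, $X(0)\in\mathbb R$. $W$ is a standard one-dimensional Brownian motion; $L^2_a$ is the space of real-valued square-integrable processes on $\Omega\times[0,T]$ adapted to the filtration generated by $W$; $\|\cdot\|_2$ is the $L^2(\Omega\times[0,T])$ norm. $C^h([0,T])$ is the set of $h$-Hölder continuous functions on $[0,T]$. The Bernstein polynomial approximation of order $n$ of $K$ is $K_n(t)=\frac{1}{T^n}\sum_{k=0}^nK\big(\frac{Tk}{n}\big)\binom nk t^k(T-t)^{n-k}$. *)

theory Defs
  imports "HOL-Probability.Probability"
begin

definition std_brownian_motion :: "'a measure \<Rightarrow> (real \<Rightarrow> 'a \<Rightarrow> real) \<Rightarrow> bool" where
  "std_brownian_motion M W \<longleftrightarrow>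
     prob_space M \<and>
     (\<forall>t\<ge>0. W t \<in> borel_measurable M) \<and>
     (\<forall>\<omega>\<in>space M. W 0 \<omega> = 0 \<and> continuous_on {0..} (\<lambda>t. W t \<omega>)) \<and>
     (\<forall>s t. 0 \<le> s \<and> s < t \<longrightarrow>
        distributed M lborel (\<lambda>\<omega>. W t \<omega> - W s \<omega>)
          (\<lambda>x. ennreal (normal_density 0 (sqrt (t - s)) x))) \<and>
     (\<forall>(k::nat) (\<tau>::nat \<Rightarrow> real). 0 \<le> \<tau> 0 \<and> (\<forall>i<k. \<tau> i < \<tau> (Suc i)) \<longrightarrow>
        prob_space.indep_vars M (\<lambda>_. borel) (\<lambda>i \<omega>. W (\<tau> (Suc i)) \<omega> - W (\<tau> i) \<omega>) {..<k})"

definition bm_filtration :: "'a measure \<Rightarrow> (real \<Rightarrow> 'a \<Rightarrow> real) \<Rightarrow> real \<Rightarrow> 'a measure" where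
  "bm_filtration M W t = sigma (space M)
     {(W s) -` B \<inter> space M | s B. s \<in> {0..t} \<and> B \<in> sets borel}"

definition OmegaT :: "'a measure \<Rightarrow> real \<Rightarrow> ('a \<times> real) measure" where
  "OmegaT M T = M \<Otimes>\<^sub>M restrict_space lborel {0..T}"

definition L2a :: "'a measure \<Rightarrow> (real \<Rightarrow> 'a \<Rightarrow> real) \<Rightarrow> real \<Rightarrow> (real \<Rightarrow> 'a \<Rightarrow> real) set" where
  "L2a M W T = {u. (\<lambda>(\<omega>,s). u s \<omega>) \<in> borel_measurable (OmegaT M T) \<and>
                   integrable (OmegaT M T) (\<lambda>(\<omega>,s). (u s \<omega>)^2) \<and>
                   (\<forall>t\<in>{0..T}. u t \<in> borel_measurable (bm_filtration M W t))}"

definition L2norm :: "'a measure \<Rightarrow> real \<Rightarrow> (real \<Rightarrow> 'a \<Rightarrow> real) \<Rightarrow> real" where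
  "L2norm M T u = sqrt (integral\<^sup>L (OmegaT M T) (\<lambda>(\<omega>,s). (u s \<omega>)^2))"

text \<open>Y is (a version of) the Wiener integral \<integral>_0^t f(s) dW(s) of a continuous
  deterministic integrand f: the L^2(M)-limit of the left-point Riemann--Ito sums
  over uniform partitions of [0,t].\<close>
definition wiener_sum :: "(real \<Rightarrow> 'a \<Rightarrow> real) \<Rightarrow> real \<Rightarrow> (real \<Rightarrow> real) \<Rightarrow> nat \<Rightarrow> 'a \<Rightarrow> real" where
  "wiener_sum W t f m \<omega> = (\<Sum>i<m. f (t * real i / real m) *
        (W (t * real (Suc i) / real m) \<omega> - W (t * real i / real m) \<omega>))"

definition is_wiener_integral ::
  "'a measure \<Rightarrow> (real \<Rightarrow> 'a \<Rightarrow> real) \<Rightarrow> real \<Rightarrow> (real \<Rightarrow> real) \<Rightarrow> ('a \<Rightarrow> real) \<Rightarrow> bool" where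
  "is_wiener_integral M W t f Y \<longleftrightarrow>
     Y \<in> borel_measurable M \<and>
     (\<forall>m. integrable M (\<lambda>\<omega>. (wiener_sum W t f m \<omega> - Y \<omega>)^2)) \<and>
     (\<lambda>m. integral\<^sup>L M (\<lambda>\<omega>. (wiener_sum W t f m \<omega> - Y \<omega>)^2)) \<longlonglongrightarrow> 0"

definition holder_on :: "real \<Rightarrow> real \<Rightarrow> (real \<Rightarrow> real) \<Rightarrow> bool" where
  "holder_on T h K \<longleftrightarrow> (\<exists>C. \<forall>s\<in>{0..T}. \<forall>t\<in>{0..T}. \<bar>K s - K t\<bar> \<le> C * \<bar>s - t\<bar> powr h)"

definition bernstein :: "real \<Rightarrow> (real \<Rightarrow> real) \<Rightarrow> nat \<Rightarrow> real \<Rightarrow> real" where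
  "bernstein T K n t = (1 / T ^ n) *
     (\<Sum>k=0..n. K (T * real k / real n) * real (n choose k) * t ^ k * (T - t) ^ (n - k))"

text \<open>X solves the controlled Volterra equation with kernel K, control u and noise term
  Z(t) = \<integral>_0^t K(t-s) dW(s):
  X(t) = x0 + \<integral>_0^t K(t-s)(\<alpha> u(s) - \<beta> X(s)) ds + \<sigma> Z(t), t \<in> [0,T], a.s.\<close>
definition volterra_solution ::
  "'a measure \<Rightarrow> real \<Rightarrow> (real \<Rightarrow> real) \<Rightarrow> real \<Rightarrow> real \<Rightarrow> real \<Rightarrow> real \<Rightarrow>
   (real \<Rightarrow> 'a \<Rightarrow> real) \<Rightarrow> (real \<Rightarrow> 'a \<Rightarrow> real) \<Rightarrow> (real \<Rightarrow> 'a \<Rightarrow> real) \<Rightarrow> bool" where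
  "volterra_solution M T K \<alpha> \<beta> \<sigma> x0 Z u X \<longleftrightarrow>
     (\<forall>t\<in>{0..T}. X t \<in> borel_measurable M) \<and>
     (\<lambda>(\<omega>,s). X s \<omega>) \<in> borel_measurable (OmegaT M T) \<and>
     (\<forall>t\<in>{0..T}. AE \<omega> in M.
        set_integrable lborel {0..t} (\<lambda>s. K (t - s) * (\<alpha> * u s \<omega> - \<beta> * X s \<omega>)) \<and>
        X t \<omega> = x0 + set_lebesgue_integral lborel {0..t} (\<lambda>s. K (t - s) * (\<alpha> * u s \<omega> - \<beta> * X s \<omega>))
                  + \<sigma> * Z t \<omega>)"

definition perf :: "'a measure \<Rightarrow> real \<Rightarrow> real \<Rightarrow> real \<Rightarrow> (real \<Rightarrow> 'a \<Rightarrow> real) \<Rightarrow> (real \<Rightarrow> 'a \<Rightarrow> real) \<Rightarrow> real" where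
  "perf M T a1 a2 u X = integral\<^sup>L M (\<lambda>\<omega>.
      - set_lebesgue_integral lborel {0..T} (\<lambda>s. a1 * (u s \<omega>)^2) + a2 * X T \<omega>)"

end

theory Submission
  imports Defs
begin

text \<open>Both functionals are bounded by D - a1/2 * ||u||^2 with a single constant D for K and
  all its Bernstein approximations. Since K is continuous and K_n(t) is a convex combination
  of values of K, all kernels are bounded by L = max |K|, and the Wiener integrals of the noise
  have first moments bounded uniformly in n. Taking absolute values in the Volterra equation
  gives E|X(t)| <= A + beta L \<integral>_0^t E|X(s)| ds with A = |x0| + sigma sup E|Z| + alpha L E\<integral>|u|,
  so by Gronwall E X(T) grows at most linearly in E\<integral>|u| <= c T/2 + ||u||^2/(2c). For c large
  this is absorbed by the quadratic running cost.\<close>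

lemma holder_on_imp_continuous_on:
  assumes "0 < h" and "holder_on T h K"
  shows "continuous_on {0..T} K"
  unfolding continuous_on_iff
proof (intro ballI allI impI)
  obtain C where C: "\<And>s t. s \<in> {0..T} \<Longrightarrow> t \<in> {0..T} \<Longrightarrow> \<bar>K s - K t\<bar> \<le> C * \<bar>s - t\<bar> powr h"
    using assms(2) unfolding holder_on_def by blast
  fix x e :: real
  assume x: "x \<in> {0..T}" and e: "0 < e"
  define d where "d = (e / (\<bar>C\<bar> + 1)) powr (1 / h)"
  show "\<exists>d>0. \<forall>y\<in>{0..T}. dist y x < d \<longrightarrow> dist (K y) (K x) < e"
  proof (intro exI[of _ d] conjI ballI impI)
    show "0 < d" using e by (simp add: d_def)
    fix y assume y: "y \<in> {0..T}" and dy: "dist y x < d"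
    have "\<bar>K y - K x\<bar> \<le> \<bar>C\<bar> * \<bar>y - x\<bar> powr h"
      using C[OF y x] by (simp add: order_trans[OF _ mult_right_mono])
    also have "\<dots> \<le> \<bar>C\<bar> * d powr h"
      using dy assms(1) by (intro mult_left_mono powr_mono2) (auto simp: dist_real_def)
    also have "d powr h = e / (\<bar>C\<bar> + 1)"
      using e assms(1) by (simp add: d_def powr_powr)
    also have "\<bar>C\<bar> * (e / (\<bar>C\<bar> + 1)) < e"
      using e by (simp add: field_simps)
    finally show "dist (K y) (K x) < e" by (simp add: dist_real_def)
  qed
qed

lemma continuous_on_bernstein: "continuous_on A (bernstein T K n)"
  unfolding bernstein_def by (intro continuous_intros)

lemma abs_bernstein_le:
  assumes T: "0 < T" and n: "1 \<le> n" and K: "\<And>r. r \<in> {0..T} \<Longrightarrow> \<bar>K r\<bar> \<le> L"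
    and r: "r \<in> {0..T}"
  shows "\<bar>bernstein T K n r\<bar> \<le> L"
proof -
  define b where "b k = real (n choose k) * r ^ k * (T - r) ^ (n - k)" for k
  have b_nonneg: "0 \<le> b k" for k using r by (simp add: b_def)
  have "\<bar>\<Sum>k=0..n. K (T * real k / real n) * b k\<bar> \<le> (\<Sum>k=0..n. L * b k)"
  proof (rule order_trans[OF sum_abs sum_mono])
    fix k assume "k \<in> {0..n}"
    then have "T * real k / real n \<in> {0..T}"
      using n T by (auto simp: field_simps intro!: mult_left_le)
    then show "\<bar>K (T * real k / real n) * b k\<bar> \<le> L * b k"
      using K b_nonneg[of k] by (simp add: abs_mult mult_right_mono)
  qed
  also have "\<dots> = L * (r + (T - r)) ^ n"
    unfolding binomial_ring sum_distrib_left by (simp add: b_def mult_ac atLeast0AtMost)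
  finally show ?thesis
    using T by (simp add: bernstein_def b_def abs_mult field_simps mult.assoc)
qed

lemma std_brownian_motion_increment_products:
  assumes BM: "std_brownian_motion M W"
    and \<tau>: "0 \<le> \<tau> 0" "\<And>k. k < m \<Longrightarrow> \<tau> k < \<tau> (Suc k)" and ij: "i < m" "j < m"
  defines "D k \<omega> \<equiv> W (\<tau> (Suc k)) \<omega> - W (\<tau> k) \<omega>"
  shows "integrable M (\<lambda>\<omega>. D i \<omega> * D j \<omega>)"
    and "(\<integral>\<omega>. D i \<omega> * D j \<omega> \<partial>M) = (if i = j then \<tau> (Suc i) - \<tau> i else 0)"
proof -
  interpret prob_space M using BM unfolding std_brownian_motion_def by blast
  have nonneg: "0 \<le> \<tau> k" if "k \<le> m" for k
    using that
  proof (induction k)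
    case (Suc k)
    then show ?case using \<tau>(2)[of k] by simp
  qed (use \<tau> in simp)
  have sd: "0 < sqrt (\<tau> (Suc k) - \<tau> k)" if "k < m" for k
    using \<tau>(2)[OF that] by simp
  have normal: "distributed M lborel (D k) (normal_density 0 (sqrt (\<tau> (Suc k) - \<tau> k)))"
    if "k < m" for k
    using BM nonneg[of k] \<tau>(2)[OF that] that unfolding std_brownian_motion_def D_def by auto
  have int: "integrable M (D k)" if "k < m" for k
    using integrable_normal_moment_nz_1[OF sd[OF that]]
    by (subst distributed_integrable[OF normal[OF that], of "\<lambda>x. x", symmetric]) auto
  have int2: "integrable M (\<lambda>\<omega>. (D k \<omega>)\<^sup>2)" if "k < m" for k
    using integrable_normal_moment[OF sd[OF that], of 0 2]
    by (subst distributed_integrable[OF normal[OF that], of "\<lambda>x. x\<^sup>2", symmetric]) auto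
  have mean: "expectation (D k) = 0" if "k < m" for k
    using normal_distributed_expectation[OF sd normal] that by simp
  have indep: "indep_vars (\<lambda>_. borel) D {i, j}"
    using BM \<tau> ij unfolding std_brownian_motion_def D_def
    by (auto intro: indep_vars_subset[of _ _ "{..<m}"])
  have "integrable M (\<lambda>\<omega>. D i \<omega> * D j \<omega>) \<and>
      (\<integral>\<omega>. D i \<omega> * D j \<omega> \<partial>M) = (if i = j then \<tau> (Suc i) - \<tau> i else 0)"
  proof (cases "i = j")
    case True
    have "variance (D i) = (\<tau> (Suc i) - \<tau> i)"
      using normal_distributed_variance[OF sd normal] ij \<tau>(2)[of i] by simp
    then show ?thesis
      using True int2[of i] mean[of i] ij by (simp add: power2_eq_square)
  next
    case False
    have "integrable M (\<lambda>\<omega>. \<Prod>k\<in>{i,j}. D k \<omega>)"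
      and "(\<integral>\<omega>. (\<Prod>k\<in>{i,j}. D k \<omega>) \<partial>M) = (\<Prod>k\<in>{i,j}. expectation (D k))"
      using ij by (auto intro!: indep_vars_integrable indep_vars_lebesgue_integral indep int)
    then show ?thesis using False mean ij by simp
  qed
  then show "integrable M (\<lambda>\<omega>. D i \<omega> * D j \<omega>)"
    and "(\<integral>\<omega>. D i \<omega> * D j \<omega> \<partial>M) = (if i = j then \<tau> (Suc i) - \<tau> i else 0)"
    by auto
qed

lemma std_brownian_motion_step_isometry:
  fixes c :: "nat \<Rightarrow> real"
  assumes BM: "std_brownian_motion M W"
    and \<tau>: "0 \<le> \<tau> 0" "\<And>k. k < m \<Longrightarrow> \<tau> k < \<tau> (Suc k)"
  defines "S \<omega> \<equiv> \<Sum>k<m. c k * (W (\<tau> (Suc k)) \<omega> - W (\<tau> k) \<omega>)"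
  shows "integrable M (\<lambda>\<omega>. (S \<omega>)\<^sup>2)"
    and "(\<integral>\<omega>. (S \<omega>)\<^sup>2 \<partial>M) = (\<Sum>k<m. (c k)\<^sup>2 * (\<tau> (Suc k) - \<tau> k))"
proof -
  define D where "D k \<omega> = W (\<tau> (Suc k)) \<omega> - W (\<tau> k) \<omega>" for k \<omega>
  have products: "integrable M (\<lambda>\<omega>. D i \<omega> * D j \<omega>)"
      "(\<integral>\<omega>. D i \<omega> * D j \<omega> \<partial>M) = (if i = j then \<tau> (Suc i) - \<tau> i else 0)"
    if "i < m" "j < m" for i j
    unfolding D_def
    by (rule std_brownian_motion_increment_products[where \<tau> = \<tau>, OF BM \<tau>(1) _ that];
        use \<tau>(2) in simp)+
  have sq: "(S \<omega>)\<^sup>2 = (\<Sum>i<m. \<Sum>j<m. c i * c j * (D i \<omega> * D j \<omega>))" for \<omega>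
    unfolding S_def D_def power2_eq_square sum_product by (simp add: mult_ac)
  have int: "integrable M (\<lambda>\<omega>. c i * c j * (D i \<omega> * D j \<omega>))" if "i < m" "j < m" for i j
    using products(1)[OF that] by simp
  show "integrable M (\<lambda>\<omega>. (S \<omega>)\<^sup>2)"
    unfolding sq by (intro Bochner_Integration.integrable_sum int) auto
  have "(\<integral>\<omega>. (S \<omega>)\<^sup>2 \<partial>M) = (\<Sum>i<m. \<integral>\<omega>. (\<Sum>j<m. c i * c j * (D i \<omega> * D j \<omega>)) \<partial>M)"
    unfolding sq by (rule Bochner_Integration.integral_sum) (auto intro!: int)
  also have "\<dots> = (\<Sum>i<m. \<Sum>j<m. c i * c j * (\<integral>\<omega>. D i \<omega> * D j \<omega> \<partial>M))"
    by (intro sum.cong refl, subst Bochner_Integration.integral_sum) (auto intro: int simp: products(1))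
  also have "\<dots> = (\<Sum>i<m. \<Sum>j<m. if j = i then (c i)\<^sup>2 * (\<tau> (Suc i) - \<tau> i) else 0)"
    by (intro sum.cong refl) (auto simp: products(2) power2_eq_square)
  finally show "(\<integral>\<omega>. (S \<omega>)\<^sup>2 \<partial>M) = (\<Sum>k<m. (c k)\<^sup>2 * (\<tau> (Suc k) - \<tau> k))"
    by (simp add: sum.delta)
qed

lemma wiener_sum_second_moment_le:
  assumes BM: "std_brownian_motion M W" and t: "0 \<le> t"
    and f: "\<And>s. s \<in> {0..t} \<Longrightarrow> \<bar>f s\<bar> \<le> L"
  shows "integrable M (\<lambda>\<omega>. (wiener_sum W t f m \<omega>)\<^sup>2)"
    and "(\<integral>\<omega>. (wiener_sum W t f m \<omega>)\<^sup>2 \<partial>M) \<le> L\<^sup>2 * t"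
proof -
  interpret prob_space M using BM unfolding std_brownian_motion_def by blast
  have "integrable M (\<lambda>\<omega>. (wiener_sum W t f m \<omega>)\<^sup>2) \<and>
      (\<integral>\<omega>. (wiener_sum W t f m \<omega>)\<^sup>2 \<partial>M) \<le> L\<^sup>2 * t"
  proof (cases "m = 0 \<or> t = 0")
    case True
    then show ?thesis using t by (auto simp: wiener_sum_def)
  next
    case False
    define \<tau> where "\<tau> k = t * real k / real m" for k
    have \<tau>: "0 \<le> \<tau> 0" "\<And>k. \<tau> k < \<tau> (Suc k)"
      using False t by (auto simp: \<tau>_def field_simps)
    have eq: "wiener_sum W t f m = (\<lambda>\<omega>. \<Sum>k<m. f (\<tau> k) * (W (\<tau> (Suc k)) \<omega> - W (\<tau> k) \<omega>))"
      by (simp add: wiener_sum_def \<tau>_def fun_eq_iff)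
    have isometry:
      "integrable M (\<lambda>\<omega>. (\<Sum>k<m. f (\<tau> k) * (W (\<tau> (Suc k)) \<omega> - W (\<tau> k) \<omega>))\<^sup>2)"
      "(\<integral>\<omega>. (\<Sum>k<m. f (\<tau> k) * (W (\<tau> (Suc k)) \<omega> - W (\<tau> k) \<omega>))\<^sup>2 \<partial>M)
         = (\<Sum>k<m. (f (\<tau> k))\<^sup>2 * (\<tau> (Suc k) - \<tau> k))"
      by (rule std_brownian_motion_step_isometry[where \<tau> = \<tau>, OF BM \<tau>(1)]; use \<tau>(2) in simp)+
    have "(\<Sum>k<m. (f (\<tau> k))\<^sup>2 * (\<tau> (Suc k) - \<tau> k)) \<le> (\<Sum>k<m. L\<^sup>2 * (t / m))"
    proof (rule sum_mono)
      fix k assume "k \<in> {..<m}"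
      then have "\<bar>f (\<tau> k)\<bar> \<le> L"
        using f False t by (auto simp: \<tau>_def field_simps intro!: mult_left_le)
      then have "(f (\<tau> k))\<^sup>2 \<le> L\<^sup>2"
        by (metis abs_ge_zero order_trans power2_abs power_mono)
      moreover have "\<tau> (Suc k) - \<tau> k = t / m"
        by (simp add: \<tau>_def diff_divide_distrib[symmetric] algebra_simps)
      ultimately show "(f (\<tau> k))\<^sup>2 * (\<tau> (Suc k) - \<tau> k) \<le> L\<^sup>2 * (t / m)"
        using t by (simp add: mult_right_mono divide_right_mono)
    qed
    also have "\<dots> = L\<^sup>2 * t" using False by simp
    finally show ?thesis unfolding eq using isometry by argo
  qed
  then show "integrable M (\<lambda>\<omega>. (wiener_sum W t f m \<omega>)\<^sup>2)"
    and "(\<integral>\<omega>. (wiener_sum W t f m \<omega>)\<^sup>2 \<partial>M) \<le> L\<^sup>2 * t"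
    by auto
qed

lemma wiener_integral_abs_le:
  assumes BM: "std_brownian_motion M W" and t: "0 \<le> t"
    and f: "\<And>s. s \<in> {0..t} \<Longrightarrow> \<bar>f s\<bar> \<le> L" and Y: "is_wiener_integral M W t f Y"
  shows "(\<integral>\<^sup>+\<omega>. ennreal \<bar>Y \<omega>\<bar> \<partial>M) \<le> ennreal (2 + L\<^sup>2 * t)"
proof -
  interpret prob_space M using BM unfolding std_brownian_motion_def by blast
  have err: "\<And>m. integrable M (\<lambda>\<omega>. (wiener_sum W t f m \<omega> - Y \<omega>)\<^sup>2)"
    and lim: "(\<lambda>m. \<integral>\<omega>. (wiener_sum W t f m \<omega> - Y \<omega>)\<^sup>2 \<partial>M) \<longlonglongrightarrow> 0"
    using Y unfolding is_wiener_integral_def by auto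
  obtain m where m: "(\<integral>\<omega>. (wiener_sum W t f m \<omega> - Y \<omega>)\<^sup>2 \<partial>M) < 1"
    using order_tendstoD(2)[OF lim, of 1] by (auto simp: eventually_sequentially)
  define S where "S = wiener_sum W t f m"
  have S: "integrable M (\<lambda>\<omega>. (S \<omega>)\<^sup>2)" "(\<integral>\<omega>. (S \<omega>)\<^sup>2 \<partial>M) \<le> L\<^sup>2 * t"
    unfolding S_def by (rule wiener_sum_second_moment_le[where L = L, OF BM t]; use f in simp)+
  have "\<bar>Y \<omega>\<bar> \<le> 1 + (S \<omega> - Y \<omega>)\<^sup>2 / 2 + (S \<omega>)\<^sup>2 / 2" for \<omega>
  proof -
    have "\<bar>a\<bar> \<le> 1 / 2 + a\<^sup>2 / 2" for a :: real
      using sum_squares_ge_zero[of "\<bar>a\<bar> - 1" 0] by (simp add: power2_eq_square algebra_simps)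
    from this[of "S \<omega> - Y \<omega>"] this[of "S \<omega>"] show ?thesis by linarith
  qed
  then have "(\<integral>\<^sup>+\<omega>. ennreal \<bar>Y \<omega>\<bar> \<partial>M)
      \<le> (\<integral>\<^sup>+\<omega>. ennreal (1 + (S \<omega> - Y \<omega>)\<^sup>2 / 2 + (S \<omega>)\<^sup>2 / 2) \<partial>M)"
    by (intro nn_integral_mono ennreal_leI)
  also have "\<dots> = ennreal (1 + (\<integral>\<omega>. (S \<omega> - Y \<omega>)\<^sup>2 \<partial>M) / 2 + (\<integral>\<omega>. (S \<omega>)\<^sup>2 \<partial>M) / 2)"
    using S(1) err[of m] by (subst nn_integral_eq_integral) (auto simp: S_def prob_space)
  also have "\<dots> \<le> ennreal (2 + L\<^sup>2 * t)"
    using S(2) m mult_nonneg_nonneg[OF zero_le_power2[of L] t]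
    by (intro ennreal_leI) (simp add: S_def)
  finally show ?thesis .
qed

lemma nn_integral_le_exp_Icc:
  assumes t: "0 \<le> t" and l: "0 < l" and S: "0 \<le> S"
    and f: "\<And>s. s \<in> {0..t} \<Longrightarrow> f s \<le> ennreal (S * exp (l * s))"
  shows "(\<integral>\<^sup>+s. f s * indicator {0..t} s \<partial>lborel) \<le> ennreal (S * (exp (l * t) - 1) / l)"
proof -
  let ?F = "\<lambda>s. S * exp (l * s) / l"
  have "((\<lambda>s. S * exp (l * s)) has_integral ?F t - ?F 0) {0..t}"
    using t l by (intro fundamental_theorem_of_calculus)
      (auto intro!: derivative_eq_intros simp: has_real_derivative_iff_has_vector_derivative[symmetric])
  moreover have "(\<lambda>s. S * exp (l * s) * indicator {0..t} s)
      = (\<lambda>s. if s \<in> {0..t} then S * exp (l * s) else 0)"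
    by (auto simp: indicator_def)
  ultimately have "((\<lambda>s. S * exp (l * s) * indicator {0..t} s) has_integral ?F t - ?F 0) UNIV"
    by (simp only: has_integral_restrict_UNIV)
  then have "(\<integral>\<^sup>+s. ennreal (S * exp (l * s) * indicator {0..t} s) \<partial>lborel) = ?F t - ?F 0"
    by (rule nn_integral_has_integral_lborel[rotated 2]) (use S in auto)
  moreover have "(\<integral>\<^sup>+s. f s * indicator {0..t} s \<partial>lborel)
      \<le> (\<integral>\<^sup>+s. ennreal (S * exp (l * s) * indicator {0..t} s) \<partial>lborel)"
    using f by (intro nn_integral_mono) (auto simp: indicator_def)
  moreover have "?F t - ?F 0 = S * (exp (l * t) - 1) / l"
    by (simp add: diff_divide_distrib right_diff_distrib)
  ultimately show ?thesis by simp
qed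

lemma gronwall_weight_le_half:
  fixes A b S t y :: real
  assumes A: "0 \<le> A" and b: "0 \<le> b" and S: "0 \<le> S" and t: "0 \<le> t"
    and y: "y \<le> A + b * (S * (exp ((2 * b + 1) * t) - 1) / (2 * b + 1))"
  shows "exp (- (2 * b + 1) * t) * y \<le> A + S / 2"
proof -
  define l where "l = 2 * b + 1"
  have l: "0 < l" using b by (simp add: l_def)
  have e: "exp (- l * t) \<le> 1" "0 \<le> 1 - exp (- l * t)" using t l by auto
  have "y \<le> A + b * (S * (exp (l * t) - 1) / l)"
    using y by (simp add: l_def)
  then have "exp (- l * t) * y \<le> exp (- l * t) * A + b / l * S * (1 - exp (- l * t))"
    using l by (simp add: mult_left_mono algebra_simps exp_minus divide_simps)
  moreover have "b / l \<le> 1 / 2" using b by (simp add: l_def field_simps)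
  then have "b / l * S * (1 - exp (- l * t)) \<le> 1 / 2 * S * 1"
    using e b l S by (intro mult_mono) auto
  moreover have "exp (- l * t) * A \<le> 1 * A"
    using e A by (intro mult_right_mono) auto
  ultimately show ?thesis unfolding l_def by linarith
qed

text \<open>The constant comes from the supremum S of exp (-(2b + 1) t) f t, which satisfies
  S \<le> A + S / 2.\<close>

lemma gronwall_ennreal_bounded:
  fixes f :: "real \<Rightarrow> ennreal"
  assumes s0: "0 \<le> s0" and A: "0 \<le> A" and b: "0 \<le> b"
    and bounded: "\<And>t. t \<in> {0..s0} \<Longrightarrow> f t \<le> ennreal B"
    and integral_ineq: "\<And>t. t \<in> {0..s0} \<Longrightarrow>
      f t \<le> ennreal A + ennreal b * (\<integral>\<^sup>+s. f s * indicator {0..t} s \<partial>lborel)"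
    and t: "t \<in> {0..s0}"
  shows "f t \<le> ennreal (2 * A * exp ((2 * b + 1) * s0))"
proof -
  define l where "l = 2 * b + 1"
  have l: "0 < l" using b by (simp add: l_def)
  define g where "g t = enn2real (f t)" for t
  have f_eq: "f t = ennreal (g t)" if "t \<in> {0..s0}" for t
    using le_less_trans[OF bounded[OF that] ennreal_less_top] by (simp add: g_def)
  have g_nonneg: "0 \<le> g t" for t by (simp add: g_def)
  define S where "S = (SUP t\<in>{0..s0}. exp (- l * t) * g t)"
  have "bdd_above ((\<lambda>t. exp (- l * t) * g t) ` {0..s0})"
  proof (rule bdd_aboveI2)
    fix t assume t: "t \<in> {0..s0}"
    have "exp (- l * t) * g t \<le> 1 * g t"
      using t l g_nonneg[of t] by (intro mult_right_mono) auto
    also have "g t \<le> max B 0"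
      using bounded[OF t] f_eq[OF t] by (cases "0 \<le> B") (auto simp: ennreal_le_iff ennreal_neg)
    finally show "exp (- l * t) * g t \<le> max B 0" by simp
  qed
  then have weighted_le: "exp (- l * t) * g t \<le> S" if "t \<in> {0..s0}" for t
    unfolding S_def using that by (rule cSUP_upper2) simp
  have S_nonneg: "0 \<le> S"
    using weighted_le[of 0] s0 g_nonneg[of 0] by simp
  have g_le: "g s \<le> S * exp (l * s)" if "s \<in> {0..s0}" for s
    using weighted_le[OF that] by (simp add: exp_minus field_simps)
  have "exp (- l * t) * g t \<le> A + S / 2" if t: "t \<in> {0..s0}" for t
    unfolding l_def
  proof (rule gronwall_weight_le_half[OF A b S_nonneg])
    have "(\<integral>\<^sup>+s. f s * indicator {0..t} s \<partial>lborel) \<le> ennreal (S * (exp (l * t) - 1) / l)"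
      using t l S_nonneg f_eq g_le by (intro nn_integral_le_exp_Icc) (auto intro: ennreal_leI)
    then have "f t \<le> ennreal A + ennreal b * ennreal (S * (exp (l * t) - 1) / l)"
      by (rule order_trans[OF integral_ineq[OF t] add_left_mono[OF mult_left_mono]]) simp
    moreover have E: "0 \<le> S * (exp (l * t) - 1) / l"
      using S_nonneg l t by simp
    then have "ennreal A + ennreal b * ennreal (S * (exp (l * t) - 1) / l)
        = ennreal (A + b * (S * (exp (l * t) - 1) / l))"
      by (simp only: ennreal_plus[OF A mult_nonneg_nonneg[OF b]] ennreal_mult[OF b])
    ultimately have "ennreal (g t) \<le> ennreal (A + b * (S * (exp (l * t) - 1) / l))"
      by (simp only: f_eq[OF t])
    then show "g t \<le> A + b * (S * (exp ((2 * b + 1) * t) - 1) / (2 * b + 1))"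
      using add_nonneg_nonneg[OF A mult_nonneg_nonneg[OF b E]] by (simp only: ennreal_le_iff l_def)
  qed (use t in simp)
  then have "S \<le> A + S / 2"
    unfolding S_def using s0 by (intro cSUP_least) auto
  then have "g t \<le> 2 * A * exp (l * s0)"
    using S_nonneg t l by (intro order_trans[OF g_le[OF t]] mult_mono) auto
  then show ?thesis
    using f_eq[OF t] by (simp add: l_def ennreal_leI)
qed

lemma set_integrable_of_kernel_bounded_below:
  fixes G x :: "real \<Rightarrow> real"
  assumes kernel_int: "set_integrable lborel {0..t} (\<lambda>s. G (t - s) * x s)"
    and x: "x \<in> borel_measurable lborel" and g: "0 < g"
    and large: "\<And>s. s \<in> {u..v} \<Longrightarrow> s \<in> {0..t} \<and> g < \<bar>G (t - s)\<bar>"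
  shows "set_integrable lborel {u..v} x"
  unfolding set_integrable_def
proof (rule Bochner_Integration.integrable_bound)
  show "integrable lborel (\<lambda>s. 1 / g * (indicator {0..t} s *\<^sub>R (G (t - s) * x s)))"
    using kernel_int unfolding set_integrable_def by (rule integrable_mult_right)
  show "(\<lambda>s. indicator {u..v} s *\<^sub>R x s) \<in> borel_measurable lborel"
    using x by measurable
  have "\<bar>x s\<bar> \<le> 1 / g * \<bar>G (t - s) * x s\<bar>" if "s \<in> {u..v}" for s
  proof -
    have "g * \<bar>x s\<bar> \<le> \<bar>G (t - s)\<bar> * \<bar>x s\<bar>"
      using large[OF that] by (intro mult_right_mono) auto
    then show ?thesis using g by (simp add: abs_mult field_simps)
  qed
  then show "AE s in lborel. norm (indicator {u..v} s *\<^sub>R x s)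
      \<le> norm (1 / g * (indicator {0..t} s *\<^sub>R (G (t - s) * x s)))"
    using large g by (auto simp: indicator_def abs_mult)
qed

text \<open>The kernel hypothesis is required for rational t (and t = T) only: in the application it
  holds almost surely for each t separately, hence simultaneously for countably many t.\<close>

lemma kernel_integrable_imp_integrable_near:
  fixes G x :: "real \<Rightarrow> real"
  assumes G: "continuous_on {0..T} G" and r: "r \<in> {0..T}" "G r \<noteq> 0"
    and x: "x \<in> borel_measurable lborel"
    and kernel_int: "\<And>t. t \<in> {0..T} \<Longrightarrow> t \<in> \<rat> \<or> t = T \<Longrightarrow>
      set_integrable lborel {0..t} (\<lambda>s. G (t - s) * x s)"
    and s: "0 \<le> s" "s + r \<le> T"
  obtains d where "0 < d"
    and "\<And>u v. {u..v} \<subseteq> ball s d \<Longrightarrow> 0 \<le> u \<Longrightarrow> v \<le> T - r \<Longrightarrow>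
      set_integrable lborel {u..v} x"
proof -
  define g where "g = \<bar>G r\<bar> / 2"
  have g: "0 < g" using r by (simp add: g_def)
  obtain \<delta> where \<delta>: "0 < \<delta>"
    and near: "\<And>r'. r' \<in> {0..T} \<Longrightarrow> dist r' r < \<delta> \<Longrightarrow> dist (G r') (G r) < g"
    using G r g unfolding continuous_on_iff by metis
  have G_large: "g < \<bar>G r'\<bar>" if "r' \<in> {0..T}" "\<bar>r' - r\<bar> < \<delta>" for r'
  proof -
    have "\<bar>G r' - G r\<bar> < g" using near[OF that(1)] that(2) by (simp add: dist_real_def)
    then show ?thesis unfolding g_def by linarith
  qed
  obtain t d where t: "t \<in> {0..T}" "t \<in> \<rat> \<or> t = T" "s + r \<le> t" "t < s + r + \<delta> / 2"
    and d: "0 < d" "d \<le> \<delta> / 2" and d_t: "s + d \<le> t \<or> t = T"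
  proof (cases "s + r < T")
    case True
    obtain q where "q \<in> \<rat>" "s + r < q" "q < min T (s + r + \<delta> / 2)"
      using Rats_dense_in_real[of "s + r" "min T (s + r + \<delta> / 2)"] True \<delta> by auto
    then show ?thesis
      using that[of q "min (\<delta> / 2) (q - s - r)"] s r \<delta> by auto
  next
    case False
    then show ?thesis
      using that[of T "\<delta> / 2"] s r \<delta> by auto
  qed
  show ?thesis
  proof (rule that[OF d(1)])
    fix u v assume uv: "{u..v} \<subseteq> ball s d" "0 \<le> u" "v \<le> T - r"
    show "set_integrable lborel {u..v} x"
    proof (rule set_integrable_of_kernel_bounded_below[OF kernel_int[OF t(1,2)] x g])
      fix s' assume "s' \<in> {u..v}"
      then have s': "dist s s' < d" "0 \<le> s'" "s' \<le> T - r" using uv by auto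
      then show "s' \<in> {0..t} \<and> g < \<bar>G (t - s')\<bar>"
        using d_t t d r by (auto simp: dist_real_def intro!: G_large)
    qed
  qed
qed

lemma kernel_integrable_imp_set_integrable:
  fixes G x :: "real \<Rightarrow> real"
  assumes G: "continuous_on {0..T} G" and r: "r \<in> {0..T}" "G r \<noteq> 0"
    and x: "x \<in> borel_measurable lborel"
    and kernel_int: "\<And>t. t \<in> {0..T} \<Longrightarrow> t \<in> \<rat> \<or> t = T \<Longrightarrow>
      set_integrable lborel {0..t} (\<lambda>s. G (t - s) * x s)"
    and s0: "s0 \<le> T - r"
  shows "set_integrable lborel {0..s0} x"
proof -
  have "(\<lambda>s. \<bar>x s\<bar>) integrable_on cbox 0 s0"
  proof (intro integrable_on_little_subintervals ballI)
    fix s assume s: "s \<in> cbox 0 s0"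
    obtain d where d: "0 < d" and int: "\<And>u v. {u..v} \<subseteq> ball s d \<Longrightarrow> 0 \<le> u \<Longrightarrow> v \<le> T - r \<Longrightarrow>
        set_integrable lborel {u..v} x"
      using kernel_integrable_imp_integrable_near[OF G r x kernel_int, of s] s s0 by auto
    show "\<exists>d>0. \<forall>u v. s \<in> cbox u v \<and> cbox u v \<subseteq> ball s d \<and> cbox u v \<subseteq> cbox 0 s0 \<longrightarrow>
        (\<lambda>s. \<bar>x s\<bar>) integrable_on cbox u v"
    proof (intro exI[of _ d] conjI allI impI d)
      fix u v assume uv: "s \<in> cbox u v \<and> cbox u v \<subseteq> ball s d \<and> cbox u v \<subseteq> cbox 0 s0"
      then have "set_integrable lborel {u..v} x"
        using s0 by (intro int) auto
      then show "(\<lambda>s. \<bar>x s\<bar>) integrable_on cbox u v"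
        by (simp add: absolutely_integrable_on_def set_borel_integral_eq_integral(1)
            set_integrable_abs)
    qed
  qed
  then have "set_integrable lebesgue {0..s0} (\<lambda>s. \<bar>x s\<bar>)"
    by (intro nonnegative_absolutely_integrable_1) auto
  then have "set_integrable lborel {0..s0} (\<lambda>s. \<bar>x s\<bar>)"
    unfolding set_integrable_def by (subst (asm) integrable_completion) (use x in measurable)
  then show ?thesis
    using x by (simp add: set_integrable_abs_iff')
qed

locale volterra_moment_bound = prob_space M
  for M :: "'a measure" and T \<alpha> \<beta> \<sigma> x0 L Cz U :: real and G :: "real \<Rightarrow> real"
    and Z u X :: "real \<Rightarrow> 'a \<Rightarrow> real" +
  assumes T_pos: "0 < T"
    and coeffs: "0 \<le> \<alpha>" "0 < \<beta>" "0 \<le> \<sigma>"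
    and G_cont: "continuous_on {0..T} G"
    and G_bound: "\<And>r. r \<in> {0..T} \<Longrightarrow> \<bar>G r\<bar> \<le> L"
    and Z_meas: "\<And>t. t \<in> {0..T} \<Longrightarrow> Z t \<in> borel_measurable M"
    and Z_moment: "\<And>t. t \<in> {0..T} \<Longrightarrow> (\<integral>\<^sup>+\<omega>. ennreal \<bar>Z t \<omega>\<bar> \<partial>M) \<le> ennreal Cz"
    and Cz_nonneg: "0 \<le> Cz"
    and u_meas: "(\<lambda>(\<omega>, s). u s \<omega>) \<in> borel_measurable (OmegaT M T)"
    and u_moment: "(\<integral>\<^sup>+\<omega>. (\<integral>\<^sup>+s. ennreal \<bar>u s \<omega>\<bar> \<partial>restrict_space lborel {0..T}) \<partial>M)
      \<le> ennreal U"
    and U_nonneg: "0 \<le> U"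
    and solution: "volterra_solution M T G \<alpha> \<beta> \<sigma> x0 Z u X"
begin

abbreviation lborel_T :: "real measure" where
  "lborel_T \<equiv> restrict_space lborel {0..T}"

sublocale MT: pair_sigma_finite M lborel_T
proof -
  interpret T: sigma_finite_measure lborel_T
    by (rule sigma_finite_measure_restrict_space) (auto intro: sigma_finite_lborel)
  show "pair_sigma_finite M lborel_T" by unfold_locales
qed

lemma L_nonneg: "0 \<le> L"
  using G_bound[of 0] T_pos by (auto intro: order_trans[OF abs_ge_zero])

lemma OmegaT_eq: "OmegaT M T = M \<Otimes>\<^sub>M lborel_T"
  by (simp add: OmegaT_def)

lemma X_meas_pair [measurable]: "(\<lambda>x. X (snd x) (fst x)) \<in> borel_measurable (M \<Otimes>\<^sub>M lborel_T)"
  using solution by (simp add: volterra_solution_def OmegaT_eq split_beta')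

lemma u_meas_pair [measurable]: "(\<lambda>x. u (snd x) (fst x)) \<in> borel_measurable (M \<Otimes>\<^sub>M lborel_T)"
  using u_meas by (simp add: OmegaT_eq split_beta')

lemma X_meas: "t \<in> {0..T} \<Longrightarrow> X t \<in> borel_measurable M"
  using solution by (simp add: volterra_solution_def)

lemma id_meas_T [measurable]: "(\<lambda>s. s) \<in> borel_measurable lborel_T"
  by (rule measurable_restrict_space1) simp

lemma X_path_meas [measurable]: "\<omega> \<in> space M \<Longrightarrow> (\<lambda>s. X s \<omega>) \<in> borel_measurable lborel_T"
  using measurable_Pair2[OF X_meas_pair] by simp

lemma u_path_meas [measurable]: "\<omega> \<in> space M \<Longrightarrow> (\<lambda>s. u s \<omega>) \<in> borel_measurable lborel_T"
  using measurable_Pair2[OF u_meas_pair] by simp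

definition kernel_abs :: "real \<Rightarrow> real \<Rightarrow> real" where
  "kernel_abs t s = indicator {0..t} s * \<bar>G (t - s)\<bar>"

lemma kernel_abs_meas [measurable]:
  assumes "t \<in> {0..T}"
  shows "kernel_abs t \<in> borel_measurable lborel_T"
proof -
  have "continuous_on {0..t} (\<lambda>s. \<bar>G (t - s)\<bar>)"
    using assms by (intro continuous_intros continuous_on_compose2[OF G_cont]) auto
  from borel_measurable_continuous_on_indicator[OF _ this]
  have "kernel_abs t \<in> borel_measurable borel"
    by (simp add: kernel_abs_def[abs_def])
  then show ?thesis
    by (auto intro: measurable_restrict_space1)
qed

lemma kernel_abs_le: "t \<in> {0..T} \<Longrightarrow> kernel_abs t s \<le> L * indicator {0..t} s"
  using G_bound[of "t - s"] by (auto simp: kernel_abs_def indicator_def)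

lemma nn_integral_kernel_abs_le:
  assumes "t \<in> {0..T}" and [measurable]: "y \<in> borel_measurable lborel_T"
  shows "(\<integral>\<^sup>+s. ennreal (kernel_abs t s * \<bar>y s\<bar>) \<partial>lborel_T)
    \<le> ennreal L * (\<integral>\<^sup>+s. ennreal (indicator {0..t} s * \<bar>y s\<bar>) \<partial>lborel_T)"
proof -
  have "(\<integral>\<^sup>+s. ennreal (kernel_abs t s * \<bar>y s\<bar>) \<partial>lborel_T)
      \<le> (\<integral>\<^sup>+s. ennreal L * ennreal (indicator {0..t} s * \<bar>y s\<bar>) \<partial>lborel_T)"
    using mult_right_mono[OF kernel_abs_le[OF assms(1)] abs_ge_zero] L_nonneg
    by (intro nn_integral_mono) (simp add: ennreal_mult[symmetric] mult.assoc)
  also have "\<dots> = ennreal L * (\<integral>\<^sup>+s. ennreal (indicator {0..t} s * \<bar>y s\<bar>) \<partial>lborel_T)"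
    by (rule nn_integral_cmult) measurable
  finally show ?thesis .
qed

definition path_norm_u :: "'a \<Rightarrow> ennreal" where
  "path_norm_u \<omega> = (\<integral>\<^sup>+s. ennreal \<bar>u s \<omega>\<bar> \<partial>lborel_T)"

lemma path_norm_u_meas [measurable]: "path_norm_u \<in> borel_measurable M"
  unfolding path_norm_u_def[abs_def] by measurable

lemma path_norm_u_finite: "AE \<omega> in M. path_norm_u \<omega> < \<infinity>"
proof -
  have "(\<integral>\<^sup>+\<omega>. path_norm_u \<omega> \<partial>M) \<noteq> \<infinity>"
    using u_moment by (auto simp: path_norm_u_def top_unique)
  from nn_integral_PInf_AE[OF path_norm_u_meas this] show ?thesis
    by (simp add: top.not_eq_extremum)
qed

lemma nn_integral_kernel_abs_u_le:
  assumes "\<omega> \<in> space M" "t \<in> {0..T}"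
  shows "(\<integral>\<^sup>+s. ennreal (kernel_abs t s * \<bar>u s \<omega>\<bar>) \<partial>lborel_T) \<le> ennreal L * path_norm_u \<omega>"
proof -
  have "(\<integral>\<^sup>+s. ennreal (indicator {0..t} s * \<bar>u s \<omega>\<bar>) \<partial>lborel_T) \<le> path_norm_u \<omega>"
    unfolding path_norm_u_def by (intro nn_integral_mono) (auto simp: indicator_def)
  then have "ennreal L * (\<integral>\<^sup>+s. ennreal (indicator {0..t} s * \<bar>u s \<omega>\<bar>) \<partial>lborel_T)
      \<le> ennreal L * path_norm_u \<omega>"
    by (rule mult_left_mono) simp
  with nn_integral_kernel_abs_le[OF assms(2) u_path_meas[OF assms(1)]] show ?thesis
    by (rule order_trans)
qed

lemma kernel_u_set_integrable:
  assumes \<omega>: "\<omega> \<in> space M" and finite: "path_norm_u \<omega> < \<infinity>" and t: "t \<in> {0..T}"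
  shows "set_integrable lborel {0..t} (\<lambda>s. G (t - s) * u s \<omega>)"
proof -
  have "integrable lborel_T (\<lambda>s. indicator {0..t} s *\<^sub>R (G (t - s) * u s \<omega>))"
  proof (rule integrableI_bounded)
    have "continuous_on {0..t} (\<lambda>s. G (t - s))"
      using t by (intro continuous_intros continuous_on_compose2[OF G_cont]) auto
    from borel_measurable_continuous_on_indicator[OF _ this]
    have "(\<lambda>s. indicator {0..t} s * G (t - s)) \<in> borel_measurable borel"
      by simp
    then have "(\<lambda>s. indicator {0..t} s * G (t - s)) \<in> borel_measurable lborel_T"
      by (auto intro: measurable_restrict_space1)
    then show "(\<lambda>s. indicator {0..t} s *\<^sub>R (G (t - s) * u s \<omega>)) \<in> borel_measurable lborel_T"
      using \<omega> by (simp add: mult.assoc[symmetric]) measurable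
    have "(\<integral>\<^sup>+s. ennreal (norm (indicator {0..t} s *\<^sub>R (G (t - s) * u s \<omega>))) \<partial>lborel_T)
        = (\<integral>\<^sup>+s. ennreal (kernel_abs t s * \<bar>u s \<omega>\<bar>) \<partial>lborel_T)"
      by (simp add: kernel_abs_def abs_mult mult.assoc)
    also have "\<dots> < \<infinity>"
      using nn_integral_kernel_abs_u_le[OF \<omega> t] finite
      by (auto simp: ennreal_mult_less_top intro: le_less_trans)
    finally show "(\<integral>\<^sup>+s. ennreal (norm (indicator {0..t} s *\<^sub>R (G (t - s) * u s \<omega>))) \<partial>lborel_T) < \<infinity>" .
  qed
  then show ?thesis
    using t by (simp add: set_integrable_def integrable_restrict_space indicator_inter_arith[symmetric]
        Int_absorb2 mult.assoc[symmetric])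
qed

lemma abs_drift_le:
  assumes \<omega>: "\<omega> \<in> space M" and t: "t \<in> {0..T}"
    and int: "set_integrable lborel {0..t} (\<lambda>s. G (t - s) * (\<alpha> * u s \<omega> - \<beta> * X s \<omega>))"
  shows "ennreal \<bar>LINT s:{0..t}|lborel. G (t - s) * (\<alpha> * u s \<omega> - \<beta> * X s \<omega>)\<bar>
    \<le> ennreal (\<alpha> * L) * path_norm_u \<omega>
      + ennreal \<beta> * (\<integral>\<^sup>+s. ennreal (kernel_abs t s * \<bar>X s \<omega>\<bar>) \<partial>lborel_T)"
proof -
  let ?f = "\<lambda>s. G (t - s) * (\<alpha> * u s \<omega> - \<beta> * X s \<omega>)"
  have [measurable]: "kernel_abs t \<in> borel_measurable lborel_T"
    using t by (rule kernel_abs_meas)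
  have "ennreal \<bar>LINT s:{0..t}|lborel. ?f s\<bar>
      \<le> (\<integral>\<^sup>+s. ennreal (norm (indicator {0..t} s *\<^sub>R ?f s)) \<partial>lborel)"
    using integral_norm_bound_ennreal[OF int[unfolded set_integrable_def]]
    by (simp add: set_lebesgue_integral_def)
  also have "\<dots> = (\<integral>\<^sup>+s. ennreal (indicator {0..t} s * \<bar>?f s\<bar>) \<partial>lborel_T)"
    using t by (subst nn_integral_restrict_space) (auto intro!: nn_integral_cong simp: indicator_def)
  also have "\<dots> \<le> (\<integral>\<^sup>+s. ennreal \<alpha> * ennreal (kernel_abs t s * \<bar>u s \<omega>\<bar>)
      + ennreal \<beta> * ennreal (kernel_abs t s * \<bar>X s \<omega>\<bar>) \<partial>lborel_T)"
  proof (intro nn_integral_mono)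
    fix s
    have abs_le: "\<bar>\<alpha> * u s \<omega> - \<beta> * X s \<omega>\<bar> \<le> \<alpha> * \<bar>u s \<omega>\<bar> + \<beta> * \<bar>X s \<omega>\<bar>"
      using abs_triangle_ineq4[of "\<alpha> * u s \<omega>" "\<beta> * X s \<omega>"] coeffs by (simp add: abs_mult)
    have "indicator {0..t} s * \<bar>?f s\<bar> = kernel_abs t s * \<bar>\<alpha> * u s \<omega> - \<beta> * X s \<omega>\<bar>"
      by (simp only: kernel_abs_def abs_mult mult.assoc)
    also have "\<dots> \<le> kernel_abs t s * (\<alpha> * \<bar>u s \<omega>\<bar> + \<beta> * \<bar>X s \<omega>\<bar>)"
      using abs_le by (rule mult_left_mono) (simp add: kernel_abs_def)
    also have "\<dots> = \<alpha> * (kernel_abs t s * \<bar>u s \<omega>\<bar>) + \<beta> * (kernel_abs t s * \<bar>X s \<omega>\<bar>)"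
      by (simp add: algebra_simps)
    finally have "indicator {0..t} s * \<bar>?f s\<bar>
        \<le> \<alpha> * (kernel_abs t s * \<bar>u s \<omega>\<bar>) + \<beta> * (kernel_abs t s * \<bar>X s \<omega>\<bar>)" .
    then have "ennreal (indicator {0..t} s * \<bar>?f s\<bar>)
        \<le> ennreal (\<alpha> * (kernel_abs t s * \<bar>u s \<omega>\<bar>) + \<beta> * (kernel_abs t s * \<bar>X s \<omega>\<bar>))"
      by (rule ennreal_leI)
    also have "\<dots> = ennreal \<alpha> * ennreal (kernel_abs t s * \<bar>u s \<omega>\<bar>)
        + ennreal \<beta> * ennreal (kernel_abs t s * \<bar>X s \<omega>\<bar>)"
      using coeffs by (simp add: kernel_abs_def ennreal_mult)
    finally show "ennreal (indicator {0..t} s * \<bar>?f s\<bar>)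
        \<le> ennreal \<alpha> * ennreal (kernel_abs t s * \<bar>u s \<omega>\<bar>) + ennreal \<beta> * ennreal (kernel_abs t s * \<bar>X s \<omega>\<bar>)" .
  qed
  also have "\<dots> = ennreal \<alpha> * (\<integral>\<^sup>+s. ennreal (kernel_abs t s * \<bar>u s \<omega>\<bar>) \<partial>lborel_T)
      + ennreal \<beta> * (\<integral>\<^sup>+s. ennreal (kernel_abs t s * \<bar>X s \<omega>\<bar>) \<partial>lborel_T)"
    using \<omega> by (simp add: nn_integral_add nn_integral_cmult)
  also have "\<dots> \<le> ennreal \<alpha> * (ennreal L * path_norm_u \<omega>)
      + ennreal \<beta> * (\<integral>\<^sup>+s. ennreal (kernel_abs t s * \<bar>X s \<omega>\<bar>) \<partial>lborel_T)"
    using nn_integral_kernel_abs_u_le[OF \<omega> t] by (intro add_mono mult_left_mono) auto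
  finally show ?thesis
    using coeffs L_nonneg by (simp add: ennreal_mult mult.assoc)
qed

lemma abs_solution_le:
  assumes t: "t \<in> {0..T}"
  shows "AE \<omega> in M. ennreal \<bar>X t \<omega>\<bar> \<le> ennreal \<bar>x0\<bar> + ennreal (\<alpha> * L) * path_norm_u \<omega>
    + ennreal \<beta> * (\<integral>\<^sup>+s. ennreal (kernel_abs t s * \<bar>X s \<omega>\<bar>) \<partial>lborel_T)
    + ennreal \<sigma> * ennreal \<bar>Z t \<omega>\<bar>"
proof -
  have "AE \<omega> in M. set_integrable lborel {0..t} (\<lambda>s. G (t - s) * (\<alpha> * u s \<omega> - \<beta> * X s \<omega>)) \<and>
      X t \<omega> = x0 + (LINT s:{0..t}|lborel. G (t - s) * (\<alpha> * u s \<omega> - \<beta> * X s \<omega>)) + \<sigma> * Z t \<omega>"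
    using solution t unfolding volterra_solution_def by blast
  with AE_space show ?thesis
  proof eventually_elim
    case (elim \<omega>)
    let ?I = "LINT s:{0..t}|lborel. G (t - s) * (\<alpha> * u s \<omega> - \<beta> * X s \<omega>)"
    have "\<bar>X t \<omega>\<bar> \<le> \<bar>x0\<bar> + \<bar>?I\<bar> + \<bar>\<sigma> * Z t \<omega>\<bar>"
      unfolding conjunct2[OF elim(2)]
      by (rule order_trans[OF abs_triangle_ineq add_right_mono[OF abs_triangle_ineq]])
    then have "ennreal \<bar>X t \<omega>\<bar> \<le> ennreal (\<bar>x0\<bar> + \<bar>?I\<bar> + \<sigma> * \<bar>Z t \<omega>\<bar>)"
      using coeffs by (intro ennreal_leI) (simp add: abs_mult)
    also have "\<dots> = ennreal \<bar>x0\<bar> + ennreal \<bar>?I\<bar> + ennreal \<sigma> * ennreal \<bar>Z t \<omega>\<bar>"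
      using coeffs by (simp add: ennreal_plus ennreal_mult)
    also have "\<dots> \<le> ennreal \<bar>x0\<bar> + (ennreal (\<alpha> * L) * path_norm_u \<omega>
        + ennreal \<beta> * (\<integral>\<^sup>+s. ennreal (kernel_abs t s * \<bar>X s \<omega>\<bar>) \<partial>lborel_T))
        + ennreal \<sigma> * ennreal \<bar>Z t \<omega>\<bar>"
      by (intro add_mono order_refl abs_drift_le[OF elim(1) t conjunct1[OF elim(2)]])
    finally show ?case
      by (simp add: add.assoc)
  qed
qed

definition path_norm_X :: "real \<Rightarrow> 'a \<Rightarrow> ennreal" where
  "path_norm_X t \<omega> = (\<integral>\<^sup>+s. ennreal (indicator {0..t} s * \<bar>X s \<omega>\<bar>) \<partial>lborel_T)"

lemma path_norm_X_meas [measurable]: "(\<lambda>\<omega>. path_norm_X t \<omega>) \<in> borel_measurable M"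
  unfolding path_norm_X_def by measurable

lemma path_norm_X_mono: "t \<le> t' \<Longrightarrow> path_norm_X t \<omega> \<le> path_norm_X t' \<omega>"
  unfolding path_norm_X_def
  by (intro nn_integral_mono ennreal_leI mult_right_mono) (auto simp: indicator_def)

text \<open>The Volterra equation does not say that the paths of X are integrable. They are,
  up to T - r for every r with G r \<noteq> 0, because X can be solved for in the (integrable)
  drift wherever the kernel is bounded away from 0.\<close>

lemma path_norm_X_finite:
  "AE \<omega> in M. \<forall>r s0. r \<in> {0..T} \<longrightarrow> G r \<noteq> 0 \<longrightarrow> s0 \<le> T - r \<longrightarrow> path_norm_X s0 \<omega> < \<infinity>"
proof -
  define Q where "Q = {t \<in> {0..T}. t \<in> \<rat> \<or> t = T}"
  have "countable Q"
    by (rule countable_subset[of _ "insert T \<rat>"]) (auto simp: Q_def countable_rat)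
  then have "AE \<omega> in M. \<forall>t\<in>Q.
      set_integrable lborel {0..t} (\<lambda>s. G (t - s) * (\<alpha> * u s \<omega> - \<beta> * X s \<omega>))"
    using solution by (subst AE_ball_countable) (auto simp: Q_def volterra_solution_def elim: AE_mp)
  with path_norm_u_finite AE_space show ?thesis
  proof eventually_elim
    case (elim \<omega>)
    define x where "x s = (if s \<in> {0..T} then X s \<omega> else 0)" for s
    have x_meas: "x \<in> borel_measurable lborel"
      using X_path_meas[OF elim(2)] unfolding x_def[abs_def]
      by (subst (asm) measurable_restrict_space_iff) auto
    have kernel_int: "set_integrable lborel {0..t} (\<lambda>s. G (t - s) * x s)"
      if t: "t \<in> {0..T}" "t \<in> \<rat> \<or> t = T" for t
    proof -
      have "set_integrable lborel {0..t} (\<lambda>s. 1 / \<beta> *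
          (\<alpha> * (G (t - s) * u s \<omega>) - G (t - s) * (\<alpha> * u s \<omega> - \<beta> * X s \<omega>)))"
        using elim(3) kernel_u_set_integrable[OF elim(2,1) t(1)] t by (auto simp: Q_def)
      then show ?thesis
        using t coeffs by (subst set_integrable_cong[OF refl refl]) (auto simp: x_def field_simps)
    qed
    show ?case
    proof (intro allI impI)
      fix r s0 assume r: "r \<in> {0..T}" "G r \<noteq> 0" and s0: "s0 \<le> T - r"
      have "set_integrable lborel {0..s0} x"
        by (rule kernel_integrable_imp_set_integrable[OF G_cont r x_meas kernel_int s0])
      then have "(\<integral>\<^sup>+s. ennreal (norm (indicator {0..s0} s *\<^sub>R x s)) \<partial>lborel) < \<infinity>"
        by (simp add: set_integrable_def integrable_iff_bounded)
      also have "(\<integral>\<^sup>+s. ennreal (norm (indicator {0..s0} s *\<^sub>R x s)) \<partial>lborel) = path_norm_X s0 \<omega>"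
        using r s0 unfolding path_norm_X_def
        by (subst nn_integral_restrict_space) (auto intro!: nn_integral_cong simp: x_def indicator_def)
      finally show "path_norm_X s0 \<omega> < \<infinity>" .
    qed
  qed
qed

lemma nn_integral_path_norm_X:
  assumes E: "E \<in> sets M" and t: "t \<in> {0..T}"
  shows "(\<integral>\<^sup>+\<omega>. indicator E \<omega> * path_norm_X t \<omega> \<partial>M)
    = (\<integral>\<^sup>+s. (\<integral>\<^sup>+\<omega>. indicator E \<omega> * ennreal \<bar>X s \<omega>\<bar> \<partial>M) * indicator {0..t} s \<partial>lborel)"
proof -
  have "(\<integral>\<^sup>+\<omega>. indicator E \<omega> * path_norm_X t \<omega> \<partial>M)
      = (\<integral>\<^sup>+\<omega>. (\<integral>\<^sup>+s. indicator E \<omega> * ennreal (indicator {0..t} s * \<bar>X s \<omega>\<bar>) \<partial>lborel_T) \<partial>M)"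
    unfolding path_norm_X_def by (intro nn_integral_cong nn_integral_cmult[symmetric]) measurable
  also have "\<dots> = (\<integral>\<^sup>+s. (\<integral>\<^sup>+\<omega>. indicator E \<omega> * ennreal (indicator {0..t} s * \<bar>X s \<omega>\<bar>) \<partial>M) \<partial>lborel_T)"
  proof (rule MT.Fubini'[symmetric])
    show "(\<lambda>(\<omega>, s). indicator E \<omega> * ennreal (indicator {0..t} s * \<bar>X s \<omega>\<bar>))
        \<in> borel_measurable (M \<Otimes>\<^sub>M lborel_T)"
      using E by measurable
  qed
  also have "\<dots> = (\<integral>\<^sup>+s. (\<integral>\<^sup>+\<omega>. indicator E \<omega> * ennreal \<bar>X s \<omega>\<bar> \<partial>M) * indicator {0..t} s \<partial>lborel)"
    using t by (subst nn_integral_restrict_space)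
      (auto intro!: nn_integral_cong simp: indicator_def)
  finally show ?thesis .
qed

abbreviation forcing_bound :: real where
  "forcing_bound \<equiv> \<bar>x0\<bar> + \<sigma> * Cz + \<alpha> * L * U"

lemma forcing_bound_nonneg: "0 \<le> forcing_bound"
  using coeffs Cz_nonneg L_nonneg U_nonneg by simp

lemma truncated_moment_le:
  assumes E: "E \<in> sets M" and t: "t \<in> {0..T}"
  shows "(\<integral>\<^sup>+\<omega>. indicator E \<omega> * ennreal \<bar>X t \<omega>\<bar> \<partial>M)
    \<le> ennreal forcing_bound + ennreal (\<beta> * L) * (\<integral>\<^sup>+\<omega>. indicator E \<omega> * path_norm_X t \<omega> \<partial>M)"
proof -
  have "AE \<omega> in M. indicator E \<omega> * ennreal \<bar>X t \<omega>\<bar>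
      \<le> ennreal \<bar>x0\<bar> + ennreal (\<alpha> * L) * path_norm_u \<omega> + ennreal \<sigma> * ennreal \<bar>Z t \<omega>\<bar>
        + ennreal (\<beta> * L) * (indicator E \<omega> * path_norm_X t \<omega>)"
    using abs_solution_le[OF t] AE_space
  proof eventually_elim
    case (elim \<omega>)
    have "ennreal \<beta> * (\<integral>\<^sup>+s. ennreal (kernel_abs t s * \<bar>X s \<omega>\<bar>) \<partial>lborel_T)
        \<le> ennreal \<beta> * (ennreal L * path_norm_X t \<omega>)"
      unfolding path_norm_X_def
      by (intro mult_left_mono nn_integral_kernel_abs_le[OF t X_path_meas[OF elim(2)]]) simp
    then have "ennreal \<bar>X t \<omega>\<bar> \<le> ennreal \<bar>x0\<bar> + ennreal (\<alpha> * L) * path_norm_u \<omega>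
        + ennreal \<sigma> * ennreal \<bar>Z t \<omega>\<bar> + ennreal (\<beta> * L) * path_norm_X t \<omega>"
      using elim(1) coeffs L_nonneg
      by (auto simp: ennreal_mult mult.assoc add_ac intro: order_trans add_left_mono)
    then show ?case
      by (cases "\<omega> \<in> E") auto
  qed
  then have "(\<integral>\<^sup>+\<omega>. indicator E \<omega> * ennreal \<bar>X t \<omega>\<bar> \<partial>M)
      \<le> (\<integral>\<^sup>+\<omega>. ennreal \<bar>x0\<bar> + ennreal (\<alpha> * L) * path_norm_u \<omega> + ennreal \<sigma> * ennreal \<bar>Z t \<omega>\<bar>
        + ennreal (\<beta> * L) * (indicator E \<omega> * path_norm_X t \<omega>) \<partial>M)"
    by (rule nn_integral_mono_AE)
  also have "\<dots> = ennreal \<bar>x0\<bar> + ennreal (\<alpha> * L) * (\<integral>\<^sup>+\<omega>. path_norm_u \<omega> \<partial>M)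
      + ennreal \<sigma> * (\<integral>\<^sup>+\<omega>. ennreal \<bar>Z t \<omega>\<bar> \<partial>M)
      + ennreal (\<beta> * L) * (\<integral>\<^sup>+\<omega>. indicator E \<omega> * path_norm_X t \<omega> \<partial>M)"
    using E Z_meas[OF t] by (simp add: nn_integral_add nn_integral_cmult emeasure_space_1)
  also have "\<dots> \<le> ennreal \<bar>x0\<bar> + ennreal (\<alpha> * L) * ennreal U + ennreal \<sigma> * ennreal Cz
      + ennreal (\<beta> * L) * (\<integral>\<^sup>+\<omega>. indicator E \<omega> * path_norm_X t \<omega> \<partial>M)"
    using u_moment Z_moment[OF t] unfolding path_norm_u_def
    by (intro add_mono mult_left_mono order_refl) auto
  also have "ennreal \<bar>x0\<bar> + ennreal (\<alpha> * L) * ennreal U + ennreal \<sigma> * ennreal Cz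
      = ennreal forcing_bound"
    using coeffs L_nonneg U_nonneg Cz_nonneg by (simp add: ennreal_mult)
  finally show ?thesis .
qed

abbreviation gronwall_bound :: real where
  "gronwall_bound \<equiv> 2 * forcing_bound * exp ((2 * (\<beta> * L) + 1) * T)"

text \<open>On an event where the path norm of X is bounded, the moments of X are bounded functions
  of t, so that Gronwall's inequality applies.\<close>

lemma truncated_moment_le_gronwall_bound:
  assumes s0: "s0 \<in> {0..T}" and E: "E \<in> sets M"
    and small: "\<And>\<omega>. \<omega> \<in> E \<Longrightarrow> path_norm_X s0 \<omega> \<le> ennreal c" and t: "t \<in> {0..s0}"
  shows "(\<integral>\<^sup>+\<omega>. indicator E \<omega> * ennreal \<bar>X t \<omega>\<bar> \<partial>M) \<le> ennreal gronwall_bound"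
proof -
  define F where "F t = (\<integral>\<^sup>+\<omega>. indicator E \<omega> * ennreal \<bar>X t \<omega>\<bar> \<partial>M)" for t
  have ineq: "F t \<le> ennreal forcing_bound + ennreal (\<beta> * L) * (\<integral>\<^sup>+\<omega>. indicator E \<omega> * path_norm_X t \<omega> \<partial>M)"
    if "t \<in> {0..s0}" for t
    unfolding F_def using that s0 by (intro truncated_moment_le E) auto
  have "F t \<le> ennreal forcing_bound + ennreal (\<beta> * L) * ennreal c" if t: "t \<in> {0..s0}" for t
  proof -
    have "(\<integral>\<^sup>+\<omega>. indicator E \<omega> * path_norm_X t \<omega> \<partial>M) \<le> (\<integral>\<^sup>+\<omega>. ennreal c \<partial>M)"
      using small path_norm_X_mono[of t s0] t
      by (intro nn_integral_mono) (auto simp: indicator_def intro: order_trans)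
    also have "\<dots> = ennreal c"
      by (simp add: emeasure_space_1)
    finally show ?thesis
      by (rule order_trans[OF ineq[OF t] add_left_mono[OF mult_left_mono]]) simp
  qed
  then have bounded: "F t \<le> ennreal (forcing_bound + \<beta> * L * max c 0)" if "t \<in> {0..s0}" for t
    using that coeffs L_nonneg forcing_bound_nonneg
    by (auto simp: ennreal_mult ennreal_max_0 intro: order_trans)
  have "F t \<le> ennreal (2 * forcing_bound * exp ((2 * (\<beta> * L) + 1) * s0))"
  proof (rule gronwall_ennreal_bounded[OF _ forcing_bound_nonneg _ bounded _ t])
    fix t' assume t': "t' \<in> {0..s0}"
    then show "F t' \<le> ennreal forcing_bound + ennreal (\<beta> * L) * (\<integral>\<^sup>+s. F s * indicator {0..t'} s \<partial>lborel)"
      using ineq[OF t'] nn_integral_path_norm_X[OF E, of t'] s0 by (simp add: F_def)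
  qed (use s0 t coeffs L_nonneg in auto)
  also have "\<dots> \<le> ennreal gronwall_bound"
    using s0 coeffs L_nonneg forcing_bound_nonneg
    by (intro ennreal_leI mult_left_mono) (auto intro!: mult_left_mono)
  finally show ?thesis unfolding F_def .
qed

lemma moment_abs_solution_le_of_finite:
  assumes s0: "s0 \<in> {0..T}" and finite: "AE \<omega> in M. path_norm_X s0 \<omega> < \<infinity>"
    and t: "t \<in> {0..s0}"
  shows "(\<integral>\<^sup>+\<omega>. ennreal \<bar>X t \<omega>\<bar> \<partial>M) \<le> ennreal gronwall_bound"
proof -
  define E where "E N = {\<omega> \<in> space M. path_norm_X s0 \<omega> \<le> of_nat N}" for N :: nat
  have E_sets [measurable]: "E N \<in> sets M" for N
    unfolding E_def by measurable
  have "AE \<omega> in M. ennreal \<bar>X t \<omega>\<bar> = (SUP N. indicator (E N) \<omega> * ennreal \<bar>X t \<omega>\<bar>)"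
    using finite AE_space
  proof eventually_elim
    case (elim \<omega>)
    then obtain N where "path_norm_X s0 \<omega> < of_nat N"
      using ennreal_Ex_less_of_nat[of "path_norm_X s0 \<omega>"] by auto
    then have "\<omega> \<in> E N" using elim by (auto simp: E_def)
    then show ?case
      by (intro antisym SUP_upper2[of N] SUP_least) (auto simp: indicator_def)
  qed
  then have "(\<integral>\<^sup>+\<omega>. ennreal \<bar>X t \<omega>\<bar> \<partial>M) = (\<integral>\<^sup>+\<omega>. (SUP N. indicator (E N) \<omega> * ennreal \<bar>X t \<omega>\<bar>) \<partial>M)"
    by (rule nn_integral_cong_AE)
  also have "\<dots> = (SUP N. \<integral>\<^sup>+\<omega>. indicator (E N) \<omega> * ennreal \<bar>X t \<omega>\<bar> \<partial>M)"
  proof (rule nn_integral_monotone_convergence_SUP)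
    show "incseq (\<lambda>N \<omega>. indicator (E N) \<omega> * ennreal \<bar>X t \<omega>\<bar>)"
      by (intro incseq_SucI le_funI) (auto simp: E_def indicator_def intro: order_trans)
    show "(\<lambda>\<omega>. indicator (E N) \<omega> * ennreal \<bar>X t \<omega>\<bar>) \<in> borel_measurable M" for N
      using X_meas[of t] s0 t by simp
  qed
  also have "\<dots> \<le> ennreal gronwall_bound"
    using s0 t by (intro SUP_least truncated_moment_le_gronwall_bound[OF s0 E_sets _ t])
      (auto simp: E_def ennreal_of_nat_eq_real_of_nat)
  finally show ?thesis .
qed

lemma moment_abs_solution_le:
  assumes s: "s \<in> {0..T}" and G: "G (T - s) \<noteq> 0"
  shows "(\<integral>\<^sup>+\<omega>. ennreal \<bar>X s \<omega>\<bar> \<partial>M) \<le> ennreal gronwall_bound"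
proof (rule moment_abs_solution_le_of_finite[OF s])
  show "AE \<omega> in M. path_norm_X s \<omega> < \<infinity>"
    using path_norm_X_finite
    by eventually_elim (drule spec[of _ "T - s"], drule spec[of _ s], use s G in simp)
qed (use s in auto)

lemma nn_integral_kernel_abs_X_le:
  "(\<integral>\<^sup>+\<omega>. (\<integral>\<^sup>+s. ennreal (kernel_abs T s * \<bar>X s \<omega>\<bar>) \<partial>lborel_T) \<partial>M)
    \<le> ennreal (L * gronwall_bound * T)"
proof -
  have T: "T \<in> {0..T}" using T_pos by simp
  have [measurable]: "kernel_abs T \<in> borel_measurable lborel_T"
    using T by (rule kernel_abs_meas)
  have "(\<integral>\<^sup>+\<omega>. (\<integral>\<^sup>+s. ennreal (kernel_abs T s * \<bar>X s \<omega>\<bar>) \<partial>lborel_T) \<partial>M)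
      = (\<integral>\<^sup>+s. (\<integral>\<^sup>+\<omega>. ennreal (kernel_abs T s * \<bar>X s \<omega>\<bar>) \<partial>M) \<partial>lborel_T)"
    by (rule MT.Fubini'[symmetric]) measurable
  also have "\<dots> = (\<integral>\<^sup>+s. ennreal (kernel_abs T s) * (\<integral>\<^sup>+\<omega>. ennreal \<bar>X s \<omega>\<bar> \<partial>M) \<partial>lborel_T)"
    using X_meas
    by (intro nn_integral_cong, subst nn_integral_cmult[symmetric])
      (auto simp: kernel_abs_def ennreal_mult)
  also have "\<dots> \<le> (\<integral>\<^sup>+s. ennreal (L * gronwall_bound) \<partial>lborel_T)"
  proof (intro nn_integral_mono)
    fix s assume "s \<in> space lborel_T"
    then have s: "s \<in> {0..T}" by simp
    show "ennreal (kernel_abs T s) * (\<integral>\<^sup>+\<omega>. ennreal \<bar>X s \<omega>\<bar> \<partial>M) \<le> ennreal (L * gronwall_bound)"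
    proof (cases "G (T - s) = 0")
      case False
      have "kernel_abs T s \<le> L" using kernel_abs_le[OF T, of s] s by simp
      then show ?thesis
        using moment_abs_solution_le[OF s False] L_nonneg forcing_bound_nonneg
        by (auto simp: ennreal_mult intro!: mult_mono)
    qed (simp add: kernel_abs_def)
  qed
  also have "\<dots> = ennreal (L * gronwall_bound * T)"
    using T_pos L_nonneg forcing_bound_nonneg by (simp add: emeasure_restrict_space ennreal_mult)
  finally show ?thesis .
qed

lemma nn_integral_abs_solution_T_le:
  "(\<integral>\<^sup>+\<omega>. ennreal \<bar>X T \<omega>\<bar> \<partial>M) \<le> ennreal (forcing_bound + \<beta> * (L * gronwall_bound * T))"
proof -
  have T: "T \<in> {0..T}" using T_pos by simp
  have [measurable]: "kernel_abs T \<in> borel_measurable lborel_T"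
    using T by (rule kernel_abs_meas)
  have "(\<integral>\<^sup>+\<omega>. ennreal \<bar>X T \<omega>\<bar> \<partial>M) \<le> (\<integral>\<^sup>+\<omega>. ennreal \<bar>x0\<bar> + ennreal (\<alpha> * L) * path_norm_u \<omega>
      + ennreal \<beta> * (\<integral>\<^sup>+s. ennreal (kernel_abs T s * \<bar>X s \<omega>\<bar>) \<partial>lborel_T)
      + ennreal \<sigma> * ennreal \<bar>Z T \<omega>\<bar> \<partial>M)"
    by (rule nn_integral_mono_AE[OF abs_solution_le[OF T]])
  also have "\<dots> = ennreal \<bar>x0\<bar> + ennreal (\<alpha> * L) * (\<integral>\<^sup>+\<omega>. path_norm_u \<omega> \<partial>M)
      + ennreal \<beta> * (\<integral>\<^sup>+\<omega>. (\<integral>\<^sup>+s. ennreal (kernel_abs T s * \<bar>X s \<omega>\<bar>) \<partial>lborel_T) \<partial>M)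
      + ennreal \<sigma> * (\<integral>\<^sup>+\<omega>. ennreal \<bar>Z T \<omega>\<bar> \<partial>M)"
    using Z_meas[OF T] by (simp add: nn_integral_add nn_integral_cmult emeasure_space_1)
  also have "\<dots> \<le> ennreal \<bar>x0\<bar> + ennreal (\<alpha> * L) * ennreal U
      + ennreal \<beta> * ennreal (L * gronwall_bound * T) + ennreal \<sigma> * ennreal Cz"
    using u_moment Z_moment[OF T] nn_integral_kernel_abs_X_le unfolding path_norm_u_def
    by (intro add_mono mult_left_mono order_refl) auto
  also have "\<dots> = ennreal (forcing_bound + \<beta> * (L * gronwall_bound * T))"
    using coeffs L_nonneg U_nonneg Cz_nonneg forcing_bound_nonneg T_pos
    by (simp add: ennreal_mult add_ac)
  finally show ?thesis .
qed

lemma expectation_solution_T_le: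
  shows integrable_solution_T: "integrable M (X T)"
    and "(\<integral>\<omega>. X T \<omega> \<partial>M) \<le> (1 + 2 * \<beta> * L * T * exp ((2 * \<beta> * L + 1) * T)) * forcing_bound"
proof -
  have bound_nonneg: "0 \<le> forcing_bound + \<beta> * (L * gronwall_bound * T)"
    using coeffs L_nonneg forcing_bound_nonneg T_pos by simp
  have X_T_meas: "X T \<in> borel_measurable M"
    using X_meas T_pos by simp
  show int: "integrable M (X T)"
    using X_T_meas nn_integral_abs_solution_T_le
    by (intro integrableI_bounded) (auto simp: top.not_eq_extremum intro: le_less_trans)
  have "ennreal (\<integral>\<omega>. \<bar>X T \<omega>\<bar> \<partial>M) = (\<integral>\<^sup>+\<omega>. ennreal \<bar>X T \<omega>\<bar> \<partial>M)"
    using int by (intro nn_integral_eq_integral[symmetric]) auto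
  also note nn_integral_abs_solution_T_le
  finally have "(\<integral>\<omega>. \<bar>X T \<omega>\<bar> \<partial>M) \<le> forcing_bound + \<beta> * (L * gronwall_bound * T)"
    using bound_nonneg by (simp add: ennreal_le_iff)
  moreover have "(\<integral>\<omega>. X T \<omega> \<partial>M) \<le> (\<integral>\<omega>. \<bar>X T \<omega>\<bar> \<partial>M)"
    using int by (intro integral_mono) auto
  ultimately show "(\<integral>\<omega>. X T \<omega> \<partial>M) \<le> (1 + 2 * \<beta> * L * T * exp ((2 * \<beta> * L + 1) * T)) * forcing_bound"
    by (simp add: algebra_simps)
qed

end

lemma nn_integral_abs_le_L2norm:
  fixes M :: "'a measure" and u :: "real \<Rightarrow> 'a \<Rightarrow> real"
  assumes M: "prob_space M" and T: "0 < T" and c: "0 < c"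
    and u_meas: "(\<lambda>(\<omega>, s). u s \<omega>) \<in> borel_measurable (OmegaT M T)"
    and u_sq: "integrable (OmegaT M T) (\<lambda>(\<omega>, s). (u s \<omega>)\<^sup>2)"
  shows "(\<integral>\<^sup>+\<omega>. (\<integral>\<^sup>+s. ennreal \<bar>u s \<omega>\<bar> \<partial>restrict_space lborel {0..T}) \<partial>M)
    \<le> ennreal (c * T / 2 + (L2norm M T u)\<^sup>2 / (2 * c))"
proof -
  interpret prob_space M by (rule M)
  interpret T: sigma_finite_measure "restrict_space lborel {0..T}"
    by (rule sigma_finite_measure_restrict_space) (auto intro: sigma_finite_lborel)
  have u_meas': "(\<lambda>x. u (snd x) (fst x)) \<in> borel_measurable (OmegaT M T)"
    using u_meas by (simp add: split_beta')
  define Q where "Q = (\<integral>x. (u (snd x) (fst x))\<^sup>2 \<partial>OmegaT M T)"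
  have Q: "(L2norm M T u)\<^sup>2 = Q"
    by (simp add: L2norm_def Q_def split_beta' integral_nonneg_AE)
  have "emeasure (OmegaT M T) (space M \<times> space (restrict_space lborel {0..T}))
      = emeasure M (space M) * emeasure (restrict_space lborel {0..T}) (space (restrict_space lborel {0..T}))"
    unfolding OmegaT_def by (rule T.emeasure_pair_measure_Times; rule sets.top)
  then have "emeasure (OmegaT M T) (space (OmegaT M T)) = ennreal T"
    using T by (simp add: OmegaT_def space_pair_measure emeasure_space_1 emeasure_restrict_space)
  then have "(\<integral>\<^sup>+x. ennreal (c / 2) \<partial>OmegaT M T) = ennreal (c * T / 2)"
    using c T by (simp add: ennreal_mult[symmetric] mult_ac)
  have "(\<integral>\<^sup>+\<omega>. (\<integral>\<^sup>+s. ennreal \<bar>u s \<omega>\<bar> \<partial>restrict_space lborel {0..T}) \<partial>M)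
      = (\<integral>\<^sup>+x. ennreal \<bar>u (snd x) (fst x)\<bar> \<partial>OmegaT M T)"
    using T.nn_integral_fst[of "\<lambda>x. ennreal \<bar>u (snd x) (fst x)\<bar>"] u_meas' by (simp add: OmegaT_def)
  also have "\<dots> \<le> (\<integral>\<^sup>+x. ennreal (c / 2) + ennreal (1 / (2 * c)) * ennreal ((u (snd x) (fst x))\<^sup>2)
      \<partial>OmegaT M T)"
  proof (intro nn_integral_mono)
    fix x
    let ?a = "u (snd x) (fst x)"
    have "2 * c * \<bar>?a\<bar> \<le> c\<^sup>2 + ?a\<^sup>2"
      using sum_squares_ge_zero[of "\<bar>?a\<bar> - c" 0] by (simp add: power2_eq_square algebra_simps)
    then have "\<bar>?a\<bar> \<le> c / 2 + 1 / (2 * c) * ?a\<^sup>2"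
      using c by (simp add: field_simps power2_eq_square)
    then show "ennreal \<bar>?a\<bar> \<le> ennreal (c / 2) + ennreal (1 / (2 * c)) * ennreal (?a\<^sup>2)"
      using c by (simp add: ennreal_mult[symmetric] ennreal_plus[symmetric] ennreal_leI del: ennreal_plus)
  qed
  also have "\<dots> = ennreal (c * T / 2) + ennreal (1 / (2 * c)) * ennreal Q"
    using u_meas' u_sq \<open>(\<integral>\<^sup>+x. ennreal (c / 2) \<partial>OmegaT M T) = ennreal (c * T / 2)\<close>
    by (simp add: nn_integral_add nn_integral_cmult nn_integral_eq_integral Q_def split_beta')
  also have "\<dots> = ennreal (c * T / 2 + (L2norm M T u)\<^sup>2 / (2 * c))"
    using c T Q integral_nonneg_AE[of "\<lambda>x. (u (snd x) (fst x))\<^sup>2" "OmegaT M T"]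
    by (simp add: ennreal_mult[symmetric] Q_def)
  finally show ?thesis .
qed

lemma perf_eq:
  fixes M :: "'a measure"
  assumes M: "prob_space M"
    and u_sq: "integrable (OmegaT M T) (\<lambda>(\<omega>, s). (u s \<omega>)\<^sup>2)" and X_T: "integrable M (X T)"
  shows "perf M T a1 a2 u X = a2 * (\<integral>\<omega>. X T \<omega> \<partial>M) - a1 * (L2norm M T u)\<^sup>2"
proof -
  interpret prob_space M by (rule M)
  interpret T: sigma_finite_measure "restrict_space lborel {0..T}"
    by (rule sigma_finite_measure_restrict_space) (auto intro: sigma_finite_lborel)
  interpret MT: pair_sigma_finite M "restrict_space lborel {0..T}" by unfold_locales
  have running_cost: "(LINT s:{0..T}|lborel. a1 * (u s \<omega>)\<^sup>2)
      = (\<integral>s. a1 * (u s \<omega>)\<^sup>2 \<partial>restrict_space lborel {0..T})" for \<omega>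
    unfolding set_lebesgue_integral_def by (subst integral_restrict_space) auto
  have int: "integrable (OmegaT M T) (\<lambda>x. a1 * (u (snd x) (fst x))\<^sup>2)"
    using u_sq by (simp add: split_beta')
  have "integrable M (\<lambda>\<omega>. LINT s:{0..T}|lborel. a1 * (u s \<omega>)\<^sup>2)"
    unfolding running_cost using MT.integrable_fst'[OF int[unfolded OmegaT_def]] by simp
  moreover have "(\<integral>\<omega>. (LINT s:{0..T}|lborel. a1 * (u s \<omega>)\<^sup>2) \<partial>M) = a1 * (L2norm M T u)\<^sup>2"
    unfolding running_cost using MT.integral_fst'[OF int[unfolded OmegaT_def]]
    by (simp add: L2norm_def OmegaT_def split_beta' integral_nonneg_AE)
  ultimately show ?thesis
    using X_T by (simp add: perf_def)
qed

lemma perf_le_L2norm: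
  fixes M :: "'a measure"
  assumes M: "prob_space M" and T: "0 < T" and coeffs: "0 \<le> \<alpha>" "0 < \<beta>" "0 \<le> \<sigma>"
    and a2: "0 \<le> a2" and c: "0 < c" and Cz: "0 \<le> Cz"
    and G: "continuous_on {0..T} G" "\<And>r. r \<in> {0..T} \<Longrightarrow> \<bar>G r\<bar> \<le> L"
    and Z: "\<And>t. t \<in> {0..T} \<Longrightarrow> Z t \<in> borel_measurable M"
      "\<And>t. t \<in> {0..T} \<Longrightarrow> (\<integral>\<^sup>+\<omega>. ennreal \<bar>Z t \<omega>\<bar> \<partial>M) \<le> ennreal Cz"
    and u: "(\<lambda>(\<omega>, s). u s \<omega>) \<in> borel_measurable (OmegaT M T)"
      "integrable (OmegaT M T) (\<lambda>(\<omega>, s). (u s \<omega>)\<^sup>2)"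
    and X: "volterra_solution M T G \<alpha> \<beta> \<sigma> x0 Z u X"
  shows "perf M T a1 a2 u X \<le> a2 * (1 + 2 * \<beta> * L * T * exp ((2 * \<beta> * L + 1) * T))
      * (\<bar>x0\<bar> + \<sigma> * Cz + \<alpha> * L * (c * T / 2 + (L2norm M T u)\<^sup>2 / (2 * c)))
    - a1 * (L2norm M T u)\<^sup>2"
proof -
  interpret volterra_moment_bound M T \<alpha> \<beta> \<sigma> x0 L Cz "c * T / 2 + (L2norm M T u)\<^sup>2 / (2 * c)" G Z u X
  proof (intro volterra_moment_bound.intro volterra_moment_bound_axioms.intro)
    show "(\<integral>\<^sup>+\<omega>. (\<integral>\<^sup>+s. ennreal \<bar>u s \<omega>\<bar> \<partial>restrict_space lborel {0..T}) \<partial>M)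
        \<le> ennreal (c * T / 2 + (L2norm M T u)\<^sup>2 / (2 * c))"
      by (rule nn_integral_abs_le_L2norm[OF M T c u])
    show "0 \<le> c * T / 2 + (L2norm M T u)\<^sup>2 / (2 * c)"
      using c T by simp
  qed (fact M T coeffs G Z u(1) X Cz)+
  have "perf M T a1 a2 u X = a2 * (\<integral>\<omega>. X T \<omega> \<partial>M) - a1 * (L2norm M T u)\<^sup>2"
    using M u(2) integrable_solution_T by (rule perf_eq)
  also have "\<dots> \<le> a2 * ((1 + 2 * \<beta> * L * T * exp ((2 * \<beta> * L + 1) * T)) * forcing_bound)
      - a1 * (L2norm M T u)\<^sup>2"
    using expectation_solution_T_le(2) a2 by (simp add: mult_left_mono)
  finally show ?thesis
    by (simp add: mult.assoc)
qed

lemma wiener_integral_kernel_moment_le: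
  assumes BM: "std_brownian_motion M W" and G: "\<And>r. r \<in> {0..T} \<Longrightarrow> \<bar>G r\<bar> \<le> L"
    and Z: "\<forall>t\<in>{0..T}. is_wiener_integral M W t (\<lambda>s. G (t - s)) (Z t)" and t: "t \<in> {0..T}"
  shows "Z t \<in> borel_measurable M" and "(\<integral>\<^sup>+\<omega>. ennreal \<bar>Z t \<omega>\<bar> \<partial>M) \<le> ennreal (2 + L\<^sup>2 * T)"
proof -
  show "Z t \<in> borel_measurable M"
    using Z t by (simp add: is_wiener_integral_def)
  have "(\<integral>\<^sup>+\<omega>. ennreal \<bar>Z t \<omega>\<bar> \<partial>M) \<le> ennreal (2 + L\<^sup>2 * t)"
    using t Z by (intro wiener_integral_abs_le[OF BM]) (auto intro: G)
  also have "\<dots> \<le> ennreal (2 + L\<^sup>2 * T)"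
    using t by (intro ennreal_leI) (simp add: mult_left_mono)
  finally show "(\<integral>\<^sup>+\<omega>. ennreal \<bar>Z t \<omega>\<bar> \<partial>M) \<le> ennreal (2 + L\<^sup>2 * T)" .
qed

lemma perf_le_uniform:
  fixes M :: "'a measure" and W :: "real \<Rightarrow> 'a \<Rightarrow> real"
  assumes BM: "std_brownian_motion M W" and T: "0 < T" and coeffs: "0 \<le> \<alpha>" "0 < \<beta>" "0 \<le> \<sigma>"
    and a: "0 < a1" "0 \<le> a2" and L: "0 \<le> L"
  obtains D where "\<And>G Z u X. continuous_on {0..T} G \<Longrightarrow> (\<And>r. r \<in> {0..T} \<Longrightarrow> \<bar>G r\<bar> \<le> L) \<Longrightarrow>
    \<forall>t\<in>{0..T}. is_wiener_integral M W t (\<lambda>s. G (t - s)) (Z t) \<Longrightarrow> u \<in> L2a M W T \<Longrightarrow>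
    volterra_solution M T G \<alpha> \<beta> \<sigma> x0 Z u X \<Longrightarrow> perf M T a1 a2 u X \<le> D - a1 / 2 * (L2norm M T u)\<^sup>2"
proof -
  define K where "K = 1 + 2 * \<beta> * L * T * exp ((2 * \<beta> * L + 1) * T)"
  \<comment> \<open>c is chosen so that the part of the bound on E X(T) that grows with the L2 norm of u
    is absorbed by half of the quadratic running cost.\<close>
  define c where "c = a2 * K * \<alpha> * L / a1 + 1"
  have "0 \<le> K"
    using coeffs L T by (simp add: K_def)
  then have "0 \<le> a2 * K * \<alpha> * L / a1"
    using coeffs a L by simp
  then have c: "0 < c"
    by (simp add: c_def)
  have absorb: "a2 * K * \<alpha> * L / (2 * c) \<le> a1 / 2"
    using a c by (simp add: c_def field_simps)
  show ?thesis
  proof (rule that)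
    fix G Z u X
    assume G: "continuous_on {0..T} G" "\<And>r. r \<in> {0..T} \<Longrightarrow> \<bar>G r\<bar> \<le> L"
      and Z: "\<forall>t\<in>{0..T}. is_wiener_integral M W t (\<lambda>s. G (t - s)) (Z t)"
      and u: "u \<in> L2a M W T" and X: "volterra_solution M T G \<alpha> \<beta> \<sigma> x0 Z u X"
    have M: "prob_space M"
      using BM unfolding std_brownian_motion_def by blast
    have Z_moment: "Z t \<in> borel_measurable M" "(\<integral>\<^sup>+\<omega>. ennreal \<bar>Z t \<omega>\<bar> \<partial>M) \<le> ennreal (2 + L\<^sup>2 * T)"
      if "t \<in> {0..T}" for t
      by (rule wiener_integral_kernel_moment_le[OF BM _ Z that]; fact G(2))+
    have u_L2: "(\<lambda>(\<omega>, s). u s \<omega>) \<in> borel_measurable (OmegaT M T)"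
      "integrable (OmegaT M T) (\<lambda>(\<omega>, s). (u s \<omega>)\<^sup>2)"
      using u by (simp_all add: L2a_def)
    have "perf M T a1 a2 u X \<le> a2 * K
        * (\<bar>x0\<bar> + \<sigma> * (2 + L\<^sup>2 * T) + \<alpha> * L * (c * T / 2 + (L2norm M T u)\<^sup>2 / (2 * c)))
      - a1 * (L2norm M T u)\<^sup>2"
      unfolding K_def
      by (intro perf_le_L2norm[where G = G and Z = Z, OF M T coeffs a(2) c])
        (fact G Z_moment u_L2 X | use T in simp)+
    also have "\<dots> = a2 * K * (\<bar>x0\<bar> + \<sigma> * (2 + L\<^sup>2 * T) + \<alpha> * L * (c * T / 2))
        + a2 * K * \<alpha> * L / (2 * c) * (L2norm M T u)\<^sup>2 - a1 * (L2norm M T u)\<^sup>2"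
      using c by (simp add: field_simps)
    also have "\<dots> \<le> a2 * K * (\<bar>x0\<bar> + \<sigma> * (2 + L\<^sup>2 * T) + \<alpha> * L * (c * T / 2))
        - a1 / 2 * (L2norm M T u)\<^sup>2"
      using mult_right_mono[OF absorb zero_le_power2[of "L2norm M T u"]] by linarith
    finally show "perf M T a1 a2 u X
        \<le> a2 * K * (\<bar>x0\<bar> + \<sigma> * (2 + L\<^sup>2 * T) + \<alpha> * L * (c * T / 2)) - a1 / 2 * (L2norm M T u)\<^sup>2" .
  qed
qed

lemma quadratic_penalty_threshold:
  fixes a D B :: real
  assumes "0 < a"
  obtains R where "\<And>x. R \<le> x \<Longrightarrow> D - a * x\<^sup>2 \<le> B"
proof
  fix x assume x: "sqrt (\<bar>D - B\<bar> / a) \<le> x"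
  then have "(sqrt (\<bar>D - B\<bar> / a))\<^sup>2 \<le> x\<^sup>2"
    using assms by (intro power_mono) auto
  then have "\<bar>D - B\<bar> \<le> a * x\<^sup>2"
    using assms by (simp add: field_simps)
  then show "D - a * x\<^sup>2 \<le> B" by linarith
qed

theorem proposition3p1:
  fixes M :: "'a measure" and W :: "real \<Rightarrow> 'a \<Rightarrow> real"
    and T \<alpha> \<beta> \<sigma> a1 a2 x0 h :: real and K :: "real \<Rightarrow> real"
    and Z :: "real \<Rightarrow> 'a \<Rightarrow> real" and Zn :: "nat \<Rightarrow> real \<Rightarrow> 'a \<Rightarrow> real"
    and Xs :: "(real \<Rightarrow> 'a \<Rightarrow> real) \<Rightarrow> real \<Rightarrow> 'a \<Rightarrow> real"
    and Xns :: "nat \<Rightarrow> (real \<Rightarrow> 'a \<Rightarrow> real) \<Rightarrow> real \<Rightarrow> 'a \<Rightarrow> real"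
  assumes BM: "std_brownian_motion M W"
    and T: "T > 0" and pos: "\<alpha> > 0" "\<beta> > 0" "\<sigma> > 0" "a1 > 0" "a2 > 0"
    and h: "0 < h" "h < 1" and K: "holder_on T h K"
    and Z: "\<forall>t\<in>{0..T}. is_wiener_integral M W t (\<lambda>s. K (t - s)) (Z t)"
    and Zn: "\<forall>n\<ge>1. \<forall>t\<in>{0..T}. is_wiener_integral M W t (\<lambda>s. bernstein T K n (t - s)) (Zn n t)"
    and Xs: "\<forall>u\<in>L2a M W T. volterra_solution M T K \<alpha> \<beta> \<sigma> x0 Z u (Xs u)"
    and Xns: "\<forall>n\<ge>1. \<forall>u\<in>L2a M W T.
                volterra_solution M T (bernstein T K n) \<alpha> \<beta> \<sigma> x0 (Zn n) u (Xns n u)"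
  shows "\<forall>B::real. \<exists>R. \<forall>u\<in>L2a M W T. L2norm M T u \<ge> R \<longrightarrow>
           (\<forall>n\<ge>1. perf M T a1 a2 u (Xns n u) \<le> B) \<and> perf M T a1 a2 u (Xs u) \<le> B"
proof
  fix B :: real
  have K_cont: "continuous_on {0..T} K"
    using h(1) K by (rule holder_on_imp_continuous_on)
  obtain L where L_nonneg: "0 \<le> L" and L: "\<And>r. r \<in> {0..T} \<Longrightarrow> \<bar>K r\<bar> \<le> L"
    using continuous_on_compact_bound[OF compact_Icc K_cont] by auto
  obtain D where D: "\<And>G Z u X. continuous_on {0..T} G \<Longrightarrow> (\<And>r. r \<in> {0..T} \<Longrightarrow> \<bar>G r\<bar> \<le> L) \<Longrightarrow>
      \<forall>t\<in>{0..T}. is_wiener_integral M W t (\<lambda>s. G (t - s)) (Z t) \<Longrightarrow> u \<in> L2a M W T \<Longrightarrow>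
      volterra_solution M T G \<alpha> \<beta> \<sigma> x0 Z u X \<Longrightarrow> perf M T a1 a2 u X \<le> D - a1 / 2 * (L2norm M T u)\<^sup>2"
    by (rule perf_le_uniform[where ?x0.0 = x0, OF BM T less_imp_le[OF pos(1)] pos(2)
          less_imp_le[OF pos(3)] pos(4) less_imp_le[OF pos(5)] L_nonneg]) (erule that)
  obtain R where R: "\<And>x. R \<le> x \<Longrightarrow> D - a1 / 2 * x\<^sup>2 \<le> B"
    using quadratic_penalty_threshold[of "a1 / 2"] pos(4) by auto
  show "\<exists>R. \<forall>u\<in>L2a M W T. L2norm M T u \<ge> R \<longrightarrow>
      (\<forall>n\<ge>1. perf M T a1 a2 u (Xns n u) \<le> B) \<and> perf M T a1 a2 u (Xs u) \<le> B"
  proof (intro exI[of _ R] ballI impI conjI allI)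
    fix u assume u: "u \<in> L2a M W T" and norm: "R \<le> L2norm M T u"
    show "perf M T a1 a2 u (Xs u) \<le> B"
      using D[OF K_cont _ Z u Xs[rule_format, OF u]] L R[OF norm] by fastforce
    fix n :: nat assume n: "1 \<le> n"
    have "\<forall>t\<in>{0..T}. is_wiener_integral M W t (\<lambda>s. bernstein T K n (t - s)) (Zn n t)"
      using Zn n by simp
    then show "perf M T a1 a2 u (Xns n u) \<le> B"
      using D[OF continuous_on_bernstein _ _ u Xns[rule_format, OF n u]]
        abs_bernstein_le[OF T n L] R[OF norm] by fastforce
  qed
qed

end
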